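(* Let $0<\gamma<n$, let $\vec p,\vec q,\vec s$ be $n$-tuples with $1<p_i,q_i<\infty$ and $1<s_i\le\infty$, and let $\frac1n\sum_{i=1}^n\frac1{s_i}\le\frac1\alpha\le\frac1n\sum_{i=1}^n\frac1{p_i}$ and $\frac1n\sum_{i=1}^n\frac1{s_i}\le\frac1\beta\le\frac1n\sum_{i=1}^n\frac1{q_i}$. Assume $\gamma=\sum_{i=1}^n\frac1{p_i}-\sum_{i=1}^n\frac1{q_i}=\frac n\alpha-\frac n\beta$. Let $b$ be locally integrable. If the commutator $[b,I_\gamma]$ is bounded from $(L^{\vec p},L^{\vec s})^{\alpha}(\mathbb R^n)$ to $(L^{\vec q},L^{\vec s})^{\beta}(\mathbb R^n)$, then $b\in BMO(\mathbb R^n)$.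
   Context: $I_\gamma f(x)=C_\gamma\int_{\mathbb R^n}\frac{f(y)}{|x-y|^{n-\gamma}}\,dy$ ($C_\gamma>0$ a normalizing constant), and $[b,I_\gamma]f(x)=b(x)I_\gamma f(x)-I_\gamma(bf)(x)=C_\gamma\int_{\mathbb R^n}\frac{(b(x)-b(y))f(y)}{|x-y|^{n-\gamma}}dy$. $BMO(\mathbb R^n)$ is the space of locally integrable $b$ with $\|b\|_{BMO}=\sup_B\frac1{|B|}\int_B|b(y)-b_B|\,dy<\infty$, the supremum over all balls $B$, $b_B=\frac1{|B|}\int_Bb$. For $\vec p=(p_1,\dots,p_n)$, $\|f\|_{L^{\vec p}}=\Big(\int_{\mathbb R}\cdots\Big(\int_{\mathbb R}|f(x)|^{p_1}\,dx_1\Big)^{p_2/p_1}\cdots dx_n\Big)^{1/p_n}$ (usual modification when some exponent is $\infty$). $B(y,r)$ is the open ball of center $y$, radius $r$. $(L^{\vec p},L^{\vec s})^{\alpha}(\mathbb R^n)$ is the set of $f\in L^1_{loc}(\mathbb R^n)$ with $$\|f\|_{(L^{\vec p},L^{\vec s})^{\alpha}}:=\sup_{r>0}\Big\|\,y\mapsto |B(y,r)|^{\frac1\alpha-\frac1n\sum_{i=1}^n\frac1{p_i}-\frac1n\sum_{i=1}^n\frac1{s_i}}\,\|f\chi_{B(y,r)}\|_{L^{\vec p}}\Big\|_{L^{\vec s}}<\infty,$$ the outer $L^{\vec s}$-norm taken in $y$. *)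

theory Defs
  imports "HOL-Probability.Probability"
begin

text \<open>Euclidean space R^n, realised as functions nat => real that are
  extensional on the coordinate set {..<n} (coordinate i of the paper is index i-1),
  with the n-fold product of Lebesgue-Borel measure.\<close>

definition Rn :: "nat \<Rightarrow> (nat \<Rightarrow> real) measure" where
  "Rn n = PiM {..<n} (\<lambda>_. lborel)"

definition edist :: "nat \<Rightarrow> (nat \<Rightarrow> real) \<Rightarrow> (nat \<Rightarrow> real) \<Rightarrow> real" where
  "edist n x y = sqrt (\<Sum>i<n. (x i - y i)^2)"

definition eball :: "nat \<Rightarrow> (nat \<Rightarrow> real) \<Rightarrow> real \<Rightarrow> (nat \<Rightarrow> real) set" where
  "eball n y r = {x \<in> space (Rn n). edist n x y < r}"

definition vol :: "nat \<Rightarrow> (nat \<Rightarrow> real) set \<Rightarrow> real" where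
  "vol n A = measure (Rn n) A"

definition inv_exp :: "ennreal \<Rightarrow> real" where
  "inv_exp p = (if p = \<infinity> then 0 else 1 / enn2real p)"

definition avg_inv :: "nat \<Rightarrow> (nat \<Rightarrow> ennreal) \<Rightarrow> real" where
  "avg_inv n p = (1 / real n) * (\<Sum>i<n. inv_exp (p i))"

definition epow :: "ennreal \<Rightarrow> real \<Rightarrow> ennreal" where
  "epow x r = (if x = \<infinity> then \<infinity> else ennreal (enn2real x powr r))"

text \<open>Iterated mixed norm: first integrate in coordinate 0 (x_1) with exponent p 0,
  then coordinate 1, etc.  mixed_aux p g k x depends only on the coordinates >= k of x.\<close>
fun mixed_aux :: "(nat \<Rightarrow> ennreal) \<Rightarrow> ((nat \<Rightarrow> real) \<Rightarrow> ennreal) \<Rightarrow> nat \<Rightarrow> (nat \<Rightarrow> real) \<Rightarrow> ennreal" where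
  "mixed_aux p g 0 x = g x"
| "mixed_aux p g (Suc k) x =
     (if p k = \<infinity> then esssup lborel (\<lambda>t. mixed_aux p g k (x(k := t)))
      else epow (\<integral>\<^sup>+ t. epow (mixed_aux p g k (x(k := t))) (enn2real (p k)) \<partial>lborel)
                (1 / enn2real (p k)))"

definition mixed_norm :: "nat \<Rightarrow> (nat \<Rightarrow> ennreal) \<Rightarrow> ((nat \<Rightarrow> real) \<Rightarrow> ennreal) \<Rightarrow> ennreal" where
  "mixed_norm n p g = mixed_aux p g n (\<lambda>_. undefined)"

definition amalgam_norm :: "nat \<Rightarrow> (nat \<Rightarrow> ennreal) \<Rightarrow> (nat \<Rightarrow> ennreal) \<Rightarrow> real \<Rightarrow> ((nat \<Rightarrow> real) \<Rightarrow> real) \<Rightarrow> ennreal" where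
  "amalgam_norm n p s \<alpha> f =
     (SUP r\<in>{0<..}. mixed_norm n s (\<lambda>y.
        ennreal (vol n (eball n y r) powr (1/\<alpha> - avg_inv n p - avg_inv n s))
        * mixed_norm n p (\<lambda>x. ennreal (indicator (eball n y r) x * \<bar>f x\<bar>))))"

text \<open>Local integrability: integrable on every ball (equivalently every compact set).\<close>
definition loc_int :: "nat \<Rightarrow> ((nat \<Rightarrow> real) \<Rightarrow> real) \<Rightarrow> bool" where
  "loc_int n b = (\<forall>y\<in>space (Rn n). \<forall>r>0. set_integrable (Rn n) (eball n y r) b)"

definition in_amalgam :: "nat \<Rightarrow> (nat \<Rightarrow> ennreal) \<Rightarrow> (nat \<Rightarrow> ennreal) \<Rightarrow> real \<Rightarrow> ((nat \<Rightarrow> real) \<Rightarrow> real) \<Rightarrow> bool" where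
  "in_amalgam n p s \<alpha> f = (loc_int n f \<and> amalgam_norm n p s \<alpha> f < \<infinity>)"

definition commutator :: "nat \<Rightarrow> real \<Rightarrow> real \<Rightarrow> ((nat \<Rightarrow> real) \<Rightarrow> real) \<Rightarrow> ((nat \<Rightarrow> real) \<Rightarrow> real) \<Rightarrow> (nat \<Rightarrow> real) \<Rightarrow> real" where
  "commutator n C \<gamma> b f x =
     C * (\<integral> y. (b x - b y) * f y / edist n x y powr (real n - \<gamma>) \<partial>Rn n)"

definition ball_avg :: "nat \<Rightarrow> ((nat \<Rightarrow> real) \<Rightarrow> real) \<Rightarrow> (nat \<Rightarrow> real) set \<Rightarrow> real" where
  "ball_avg n b B = (1 / vol n B) * (\<integral> x \<in> B. b x \<partial>Rn n)"

definition BMO :: "nat \<Rightarrow> ((nat \<Rightarrow> real) \<Rightarrow> real) \<Rightarrow> bool" where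
  "BMO n b = (loc_int n b \<and> (\<exists>M. \<forall>y\<in>space (Rn n). \<forall>r>0.
      (1 / vol n (eball n y r)) * (\<integral> x \<in> eball n y r. \<bar>b x - ball_avg n b (eball n y r)\<bar> \<partial>Rn n) \<le> M))"

end

theory Submission
  imports Defs
begin

(*
  The classical median argument. Fix a ball B = B(y, r) and let B' be the ball of radius r
  centred at y + 3r e_1, so that r <= |x - z| <= 5r for x in B and z in B'. Let m be a median
  of b on B' and E = {z in B'. b z <= m}, so |E| >= |B'|/2. For x in B with b x >= m the
  integrand of [b, I_gamma] chi_E (x) has constant sign, whence
  [b, I_gamma] chi_E (x) >= C (5r)^(gamma - n) |E| (b x - m), which is of order r^gamma (b x - m).
  Integrating over B and applying Hoelder's inequality in one coordinate at a time gives
  r^gamma int_B (b - m)^+ <~ r^(n - sum 1/q_i) ||chi_B [b, I_gamma] chi_E||_(L^q).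
  The (L^q, L^s)^beta norm of a function dominates r^(n/beta - sum 1/q_i) times its L^q norm
  on any ball of radius r, while the (L^p, L^s)^alpha norm of chi_E is O(r^(n/alpha)). By the
  boundedness of the commutator and gamma = n/alpha - n/beta, all powers of r combine to
  int_B (b - m)^+ <~ r^n. The same argument for -b, using the other half of the median
  property, bounds int_B |b - m| by a constant times |B|, so b has bounded mean oscillation.
*)

section \<open>Euclidean space, balls and boxes\<close>

lemma space_Rn: "space (Rn n) = PiE {..<n} (\<lambda>_. UNIV)"
  by (simp add: Rn_def space_PiM)

lemma sets_Rn [measurable_cong]: "sets (Rn n) = sets (PiM {..<n} (\<lambda>_. lborel))"
  by (simp add: Rn_def)

lemma undefined_in_space_Rn: "(\<lambda>_. undefined) \<in> space (Rn n)"
  by (simp add: space_Rn PiE_def extensional_def)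

lemma fun_upd_in_space_Rn: "x \<in> space (Rn n) \<Longrightarrow> k < n \<Longrightarrow> x(k := t) \<in> space (Rn n)"
  by (auto simp: space_Rn PiE_def extensional_def)

lemma product_sigma_finite_lborel: "product_sigma_finite (\<lambda>_. lborel)"
  by (simp add: product_sigma_finite_def lborel.sigma_finite_measure_axioms)

lemma finite_product_sigma_finite_lborel:
  "finite_product_sigma_finite (\<lambda>_. lborel) {..<n::nat}"
  by (auto simp: finite_product_sigma_finite_def product_sigma_finite_lborel
      finite_product_sigma_finite_axioms_def)

lemma sigma_finite_Rn: "sigma_finite_measure (Rn n)"
proof -
  interpret finite_product_sigma_finite "\<lambda>_. lborel" "{..<n}"
    by (rule finite_product_sigma_finite_lborel)
  show ?thesis unfolding Rn_def by (rule sigma_finite_measure_axioms)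
qed

lemma measurable_component_Rn [measurable]: "i < n \<Longrightarrow> (\<lambda>x. x i) \<in> borel_measurable (Rn n)"
  unfolding Rn_def by measurable

lemma measurable_fun_upd_Rn [measurable]:
  "k < n \<Longrightarrow> (\<lambda>(x, t). x(k := t)) \<in> measurable (Rn n \<Otimes>\<^sub>M lborel) (Rn n)"
  unfolding Rn_def
  by (rule measurable_PiM_single')
    (auto simp: space_pair_measure space_PiM PiE_def extensional_def split: if_splits)

lemma measurable_fun_upd_slice:
  assumes "x \<in> space (Rn n)" "k < n"
  shows "(\<lambda>t. x(k := t)) \<in> measurable lborel (Rn n)"
proof -
  have "(\<lambda>t. (x, t)) \<in> measurable lborel (Rn n \<Otimes>\<^sub>M lborel)"
    using assms(1) by measurable
  from measurable_comp[OF this measurable_fun_upd_Rn[OF assms(2)]] show ?thesis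
    by (simp add: o_def)
qed

lemma borel_measurable_edist [measurable]:
  assumes "f \<in> measurable M (Rn n)" "g \<in> measurable M (Rn n)"
  shows "(\<lambda>z. edist n (f z) (g z)) \<in> borel_measurable M"
proof -
  have "(\<lambda>z. (f z i - g z i)\<^sup>2) \<in> borel_measurable M" if "i < n" for i
    using assms that by measurable
  then have "(\<lambda>z. \<Sum>i<n. (f z i - g z i)\<^sup>2) \<in> borel_measurable M"
    by (intro borel_measurable_sum) auto
  then show ?thesis
    unfolding edist_def by measurable
qed

lemma edist_eq_L2_set: "edist n x y = L2_set (\<lambda>i. x i - y i) {..<n}"
  by (simp add: edist_def L2_set_def)

lemma edist_commute: "edist n x y = edist n y x"
  unfolding edist_def by (simp add: power2_commute)

lemma edist_triangle: "edist n x z \<le> edist n x y + edist n y z"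
  unfolding edist_eq_L2_set
  using L2_set_triangle_ineq[of "\<lambda>i. x i - y i" "\<lambda>i. y i - z i" "{..<n}"] by simp

lemma abs_component_le_edist: "i < n \<Longrightarrow> \<bar>x i - y i\<bar> \<le> edist n x y"
  using member_le_L2_set[of "{..<n}" i "\<lambda>i. \<bar>x i - y i\<bar>"]
  by (simp add: edist_eq_L2_set L2_set_def)

lemma edist_less_of_components:
  assumes "n \<ge> 1" "\<rho> > 0" "\<forall>i<n. \<bar>x i - y i\<bar> < \<rho> / n"
  shows "edist n x y < \<rho>"
proof -
  have "(\<Sum>i<n. (x i - y i)\<^sup>2) < (\<Sum>i<n. (\<rho>/n)\<^sup>2)"
  proof (rule sum_strict_mono)
    show "(x i - y i)\<^sup>2 < (\<rho>/n)\<^sup>2" if "i \<in> {..<n}" for i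
      using assms(3) that
      by (metis abs_ge_zero abs_power2 lessThan_iff power2_abs power_strict_mono zero_less_numeral)
  next
    have "0 \<in> {..<n}"
      using assms(1) by simp
    then show "{..<n} \<noteq> {}"
      by blast
  qed simp
  also have "\<dots> = \<rho>\<^sup>2 / n"
    using assms(1) by (simp add: power2_eq_square)
  also have "\<dots> \<le> \<rho>\<^sup>2"
    using assms(1) by (simp add: divide_le_eq mult_le_cancel_left1)
  finally have "sqrt (\<Sum>i<n. (x i - y i)\<^sup>2) < sqrt (\<rho>\<^sup>2)"
    by (rule real_sqrt_less_mono)
  then show ?thesis
    using assms(2) by (simp add: edist_def)
qed

lemma edist_shift_first:
  assumes "n > 0" "d \<ge> 0"
  shows "edist n y (y(0 := y 0 + d)) = d"
proof -
  have "(\<Sum>i<n. (y i - (y(0 := y 0 + d)) i)\<^sup>2) = (\<Sum>i<n. if i = 0 then d\<^sup>2 else 0)"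
    by (intro sum.cong) auto
  also have "\<dots> = d\<^sup>2"
    using assms(1) by simp
  finally show ?thesis
    unfolding edist_def using assms(2) by simp
qed

lemma eball_in_sets [measurable]: "eball n y r \<in> sets (Rn n)"
proof -
  have "(\<lambda>x. edist n x (restrict y {..<n})) \<in> borel_measurable (Rn n)"
    by (rule borel_measurable_edist) (auto simp: space_Rn)
  moreover have "edist n x (restrict y {..<n}) = edist n x y" for x
    unfolding edist_def by simp
  ultimately have [measurable]: "(\<lambda>x. edist n x y) \<in> borel_measurable (Rn n)"
    by simp
  show ?thesis
    unfolding eball_def by measurable
qed

lemma emeasure_box_Rn:
  assumes "\<forall>i<n. c i \<le> d i"
  shows "emeasure (Rn n) (PiE {..<n} (\<lambda>i. {c i<..<d i})) = ennreal (\<Prod>i<n. d i - c i)"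
proof -
  interpret finite_product_sigma_finite "\<lambda>_. lborel" "{..<n}"
    by (rule finite_product_sigma_finite_lborel)
  have "emeasure (Rn n) (PiE {..<n} (\<lambda>i. {c i<..<d i})) = (\<Prod>i<n. ennreal (d i - c i))"
    unfolding Rn_def using assms by (subst measure_times) auto
  also have "\<dots> = ennreal (\<Prod>i<n. d i - c i)"
    using assms by (subst prod_ennreal) auto
  finally show ?thesis .
qed

lemma box_in_sets_Rn: "PiE {..<n} (\<lambda>i. {c i<..<d i}) \<in> sets (Rn n)"
  unfolding Rn_def by (rule sets_PiM_I_finite) auto

lemma eball_subset_box: "eball n y \<rho> \<subseteq> PiE {..<n} (\<lambda>i. {y i - \<rho><..<y i + \<rho>})"
proof
  fix x assume x: "x \<in> eball n y \<rho>"
  have "\<bar>x i - y i\<bar> < \<rho>" if "i < n" for i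
    using abs_component_le_edist[OF that, of x y] x by (simp add: eball_def)
  then show "x \<in> PiE {..<n} (\<lambda>i. {y i - \<rho><..<y i + \<rho>})"
    using x by (force simp: eball_def space_Rn PiE_iff abs_less_iff)
qed

lemma box_subset_eball:
  assumes "n \<ge> 1" "\<rho> > 0"
  shows "PiE {..<n} (\<lambda>i. {y i - \<rho>/n<..<y i + \<rho>/n}) \<subseteq> eball n y \<rho>"
proof
  fix x assume x: "x \<in> PiE {..<n} (\<lambda>i. {y i - \<rho>/n<..<y i + \<rho>/n})"
  then have "\<forall>i<n. \<bar>x i - y i\<bar> < \<rho>/n"
    by (auto simp: PiE_def Pi_def abs_less_iff)
  from edist_less_of_components[OF assms this] x show "x \<in> eball n y \<rho>"
    by (auto simp: eball_def space_Rn PiE_def)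
qed

lemma emeasure_eball_le:
  assumes "\<rho> > 0"
  shows "emeasure (Rn n) (eball n y \<rho>) \<le> ennreal ((2*\<rho>)^n)"
  using emeasure_mono[OF eball_subset_box[of n y \<rho>] box_in_sets_Rn]
    emeasure_box_Rn[of n "\<lambda>i. y i - \<rho>" "\<lambda>i. y i + \<rho>"] assms by simp

lemma emeasure_eball_less_top: "\<rho> > 0 \<Longrightarrow> emeasure (Rn n) (eball n y \<rho>) < \<infinity>"
  using emeasure_eball_le[of \<rho> n y] by (simp add: le_less_trans)

lemma vol_eball_bounds:
  assumes "n \<ge> 1" "\<rho> > 0"
  shows "(2*\<rho>/n)^n \<le> vol n (eball n y \<rho>)" "vol n (eball n y \<rho>) \<le> (2*\<rho>)^n"
proof -
  have "ennreal ((2*\<rho>/n)^n) \<le> emeasure (Rn n) (eball n y \<rho>)"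
    using emeasure_mono[OF box_subset_eball[OF assms, of y] eball_in_sets]
      emeasure_box_Rn[of n "\<lambda>i. y i - \<rho>/n" "\<lambda>i. y i + \<rho>/n"] assms by simp
  then show "(2*\<rho>/n)^n \<le> vol n (eball n y \<rho>)"
    using emeasure_eball_less_top[OF assms(2), of n y] assms
    unfolding vol_def by (simp add: emeasure_eq_ennreal_measure)
  show "vol n (eball n y \<rho>) \<le> (2*\<rho>)^n"
    using emeasure_eball_le[OF assms(2), of n y] emeasure_eball_less_top[OF assms(2), of n y] assms
    unfolding vol_def by (simp add: emeasure_eq_ennreal_measure)
qed

section \<open>Mixed Lebesgue norms\<close>

lemma borel_measurable_epow [measurable]:
  assumes [measurable]: "f \<in> borel_measurable M"
  shows "(\<lambda>x. epow (f x) r) \<in> borel_measurable M"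
  unfolding epow_def by measurable

lemma epow_0 [simp]: "epow 0 r = 0"
  by (simp add: epow_def)

lemma epow_ennreal: "0 \<le> v \<Longrightarrow> epow (ennreal v) r = ennreal (v powr r)"
  by (simp add: epow_def)

lemma epow_mono: "a \<le> b \<Longrightarrow> 0 \<le> r \<Longrightarrow> epow a r \<le> epow b r"
  unfolding epow_def
  by (cases a; cases b) (auto simp: top_unique intro!: ennreal_leI powr_mono2)

lemma epow_eq_0_iff: "r > 0 \<Longrightarrow> epow x r = 0 \<longleftrightarrow> x = 0"
  unfolding epow_def by (cases x) auto

lemma borel_measurable_esssup_lborel_param:
  fixes F :: "'a \<Rightarrow> real \<Rightarrow> ennreal"
  assumes F: "(\<lambda>(z, t). F z t) \<in> borel_measurable (M \<Otimes>\<^sub>M lborel)"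
  shows "(\<lambda>z. esssup lborel (F z)) \<in> borel_measurable M"
proof (rule borel_measurableI_le)
  fix c :: ennreal
  let ?A = "{w \<in> space (M \<Otimes>\<^sub>M lborel). c < (\<lambda>(z, t). F z t) w}"
  have A: "?A \<in> sets (M \<Otimes>\<^sub>M lborel)"
    using F by measurable
  have "esssup lborel (F z) \<le> c \<longleftrightarrow> emeasure lborel (Pair z -` ?A) = 0" if z: "z \<in> space M" for z
  proof -
    have Fz: "F z \<in> borel_measurable lborel"
      using measurable_Pair2[OF F z] by simp
    have "esssup lborel (F z) \<le> c \<longleftrightarrow> (AE t in lborel. F z t \<le> c)"
      using esssup_AE[of "F z" lborel] esssup_I[OF Fz]
      by (auto elim: eventually_mono intro: order_trans)
    also have "\<dots> \<longleftrightarrow> emeasure lborel {t \<in> space lborel. c < F z t} = 0"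
      using Fz by (subst AE_iff_measurable[OF _ refl]) (auto simp: not_le)
    also have "{t \<in> space lborel. c < F z t} = Pair z -` ?A"
      using z by (auto simp: space_pair_measure)
    finally show ?thesis .
  qed
  then have "{z \<in> space M. esssup lborel (F z) \<le> c} =
      (\<lambda>z. emeasure lborel (Pair z -` ?A)) -` {0} \<inter> space M"
    by auto
  also have "\<dots> \<in> sets M"
    by (rule measurable_sets[OF lborel.measurable_emeasure_Pair[OF A]]) simp
  finally show "{z \<in> space M. esssup lborel (F z) \<le> c} \<in> sets M" .
qed

lemma borel_measurable_mixed_aux_param:
  assumes H: "(\<lambda>(y, x). H y x) \<in> borel_measurable (N \<Otimes>\<^sub>M Rn n)"
  shows "k \<le> n \<Longrightarrow> (\<lambda>(y, x). mixed_aux p (H y) k x) \<in> borel_measurable (N \<Otimes>\<^sub>M Rn n)"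
proof (induction k)
  case 0
  then show ?case using H by simp
next
  case (Suc k)
  then have k: "k < n" by simp
  have "(\<lambda>w. (fst (fst w), (\<lambda>(x, t). x(k := t)) (snd (fst w), snd w)))
      \<in> measurable ((N \<Otimes>\<^sub>M Rn n) \<Otimes>\<^sub>M lborel) (N \<Otimes>\<^sub>M Rn n)"
    using measurable_fun_upd_Rn[OF k] by measurable
  then have "(\<lambda>((y, x), t). (y, x(k := t))) \<in> measurable ((N \<Otimes>\<^sub>M Rn n) \<Otimes>\<^sub>M lborel) (N \<Otimes>\<^sub>M Rn n)"
    by (simp add: case_prod_beta')
  from measurable_comp[OF this Suc.IH] Suc.prems
  have slice: "(\<lambda>(z, t). mixed_aux p (H (fst z)) k ((snd z)(k := t)))
      \<in> borel_measurable ((N \<Otimes>\<^sub>M Rn n) \<Otimes>\<^sub>M lborel)"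
    by (simp add: o_def case_prod_beta')
  show ?case
  proof (cases "p k = \<infinity>")
    case True
    from borel_measurable_esssup_lborel_param[OF slice] show ?thesis
      using True by (simp add: case_prod_beta')
  next
    case False
    have "(\<lambda>(z, t). epow (mixed_aux p (H (fst z)) k ((snd z)(k := t))) (enn2real (p k)))
        \<in> borel_measurable ((N \<Otimes>\<^sub>M Rn n) \<Otimes>\<^sub>M lborel)"
      using slice by (simp add: case_prod_beta')
    from lborel.borel_measurable_nn_integral[OF this] show ?thesis
      using False by (simp add: case_prod_beta') measurable
  qed
qed

lemma borel_measurable_mixed_aux:
  assumes "H \<in> borel_measurable (Rn n)" "k \<le> n"
  shows "mixed_aux p H k \<in> borel_measurable (Rn n)"
proof -
  have "(\<lambda>(y, x). H x) \<in> borel_measurable (Rn n \<Otimes>\<^sub>M Rn n)"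
    using assms(1) by measurable
  from borel_measurable_mixed_aux_param[OF this assms(2), of p]
  have "(\<lambda>(y, x). mixed_aux p H k x) \<in> borel_measurable (Rn n \<Otimes>\<^sub>M Rn n)"
    by simp
  from measurable_comp[OF measurable_Pair[OF measurable_ident_sets measurable_ident_sets] this]
  show ?thesis
    by (simp add: o_def)
qed

lemma borel_measurable_mixed_norm_param:
  assumes "(\<lambda>(y, x). H y x) \<in> borel_measurable (N \<Otimes>\<^sub>M Rn n)"
  shows "(\<lambda>y. mixed_norm n p (H y)) \<in> borel_measurable N"
proof -
  have "(\<lambda>y. (y, \<lambda>_. undefined)) \<in> measurable N (N \<Otimes>\<^sub>M Rn n)"
    using undefined_in_space_Rn by measurable
  from measurable_comp[OF this borel_measurable_mixed_aux_param[OF assms order.refl]]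
  show ?thesis
    by (simp add: o_def mixed_norm_def)
qed

lemma borel_measurable_mixed_aux_slice:
  assumes "H \<in> borel_measurable (Rn n)" "x \<in> space (Rn n)" "k < n"
  shows "(\<lambda>t. mixed_aux p H k (x(k := t))) \<in> borel_measurable lborel"
  using measurable_comp[OF measurable_fun_upd_slice[OF assms(2,3)] borel_measurable_mixed_aux[OF assms(1), of k]]
    assms(3)
  by (simp add: o_def)

lemma mixed_aux_mono:
  assumes le: "\<And>x. G x \<le> F x" and G: "G \<in> borel_measurable (Rn n)"
  shows "k \<le> n \<Longrightarrow> x \<in> space (Rn n) \<Longrightarrow> mixed_aux p G k x \<le> mixed_aux p F k x"
proof (induction k arbitrary: x)
  case 0
  then show ?case using le by simp
next
  case (Suc k)
  then have k: "k < n" by simp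
  have IH: "mixed_aux p G k (x(k := t)) \<le> mixed_aux p F k (x(k := t))" for t
    using Suc fun_upd_in_space_Rn[OF Suc.prems(2) k] by simp
  show ?case
  proof (cases "p k = \<infinity>")
    case True
    then show ?thesis
      using IH borel_measurable_mixed_aux_slice[OF G Suc.prems(2) k] by (simp add: esssup_mono)
  next
    case False
    then show ?thesis
      using IH by (simp add: epow_mono nn_integral_mono)
  qed
qed

lemma mixed_norm_mono:
  "(\<And>x. G x \<le> F x) \<Longrightarrow> G \<in> borel_measurable (Rn n) \<Longrightarrow> mixed_norm n p G \<le> mixed_norm n p F"
  unfolding mixed_norm_def by (rule mixed_aux_mono[OF _ _ order.refl undefined_in_space_Rn])

lemma mixed_aux_zero [simp]: "mixed_aux p (\<lambda>_. 0) k x = 0"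
  by (induction k arbitrary: x) (auto simp: esssup_const)

lemma mixed_aux_eq_0_outside_box:
  assumes "\<And>x. (\<exists>i<n. x i \<notin> {a i<..<b i}) \<Longrightarrow> H x = 0"
  shows "k \<le> j \<Longrightarrow> j < n \<Longrightarrow> x j \<notin> {a j<..<b j} \<Longrightarrow> mixed_aux q H k x = 0"
proof (induction k arbitrary: x)
  case 0
  then show ?case using assms by auto
next
  case (Suc k)
  then have "mixed_aux q H k (x(k := t)) = 0" for t
    by auto
  then show ?case
    by (simp add: esssup_const)
qed

definition box_indicator :: "nat \<Rightarrow> (nat \<Rightarrow> real) \<Rightarrow> (nat \<Rightarrow> real) \<Rightarrow> (nat \<Rightarrow> real) \<Rightarrow> real" where
  "box_indicator n a b x = (\<Prod>i<n. indicator {a i<..<b i} (x i))"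

lemma box_indicator_nonneg: "0 \<le> box_indicator n a b x"
  by (simp add: box_indicator_def prod_nonneg)

lemma box_indicator_eq_1: "\<forall>i<n. x i \<in> {a i<..<b i} \<Longrightarrow> box_indicator n a b x = 1"
  unfolding box_indicator_def by (intro prod.neutral) auto

lemma box_indicator_eq_0:
  assumes "i < n" "x i \<notin> {a i<..<b i}"
  shows "box_indicator n a b x = 0"
  unfolding box_indicator_def using assms by (intro prod_zero bexI[of _ i]) auto

lemma borel_measurable_box_indicator [measurable]: "box_indicator n a b \<in> borel_measurable (Rn n)"
  unfolding box_indicator_def
  by (intro borel_measurable_prod) (simp add: measurable_compose[OF measurable_component_Rn])

lemma indicator_eball_le_box_indicator:
  "indicator (eball n y \<rho>) x \<le> box_indicator n (\<lambda>i. y i - \<rho>) (\<lambda>i. y i + \<rho>) x"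
proof (cases "x \<in> eball n y \<rho>")
  case True
  then have "x \<in> PiE {..<n} (\<lambda>i. {y i - \<rho><..<y i + \<rho>})"
    using eball_subset_box by blast
  then show ?thesis
    using True by (simp add: box_indicator_eq_1 PiE_def Pi_def)
qed (simp add: box_indicator_nonneg)

lemma esssup_indicator_interval:
  fixes a b :: real and c :: ennreal
  assumes "a < b"
  shows "esssup lborel (\<lambda>t. c * indicator {a<..<b} t) = c"
proof (rule antisym)
  have m: "(\<lambda>t. c * indicator {a<..<b} t) \<in> borel_measurable lborel"
    by measurable
  show "esssup lborel (\<lambda>t. c * indicator {a<..<b} t) \<le> c"
    by (rule esssup_I[OF m]) (auto simp: indicator_def)
  show "c \<le> esssup lborel (\<lambda>t. c * indicator {a<..<b} t)"
    unfolding esssup_eq[OF m]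
  proof (rule Inf_greatest, rule ccontr)
    fix z assume z: "z \<in> {z. emeasure lborel {x \<in> space lborel. z < c * indicator {a<..<b} x} = 0}"
      and "\<not> c \<le> z"
    then have "{a<..<b} \<subseteq> {x \<in> space lborel. z < c * indicator {a<..<b} x}"
      by (auto simp: not_le)
    then have "emeasure lborel {a<..<b} \<le> 0"
      using z emeasure_mono[of "{a<..<b}" "{x \<in> space lborel. z < c * indicator {a<..<b} x}" lborel]
      by auto
    then show False
      using assms by simp
  qed
qed

lemma mixed_aux_Suc_of_indicator_slice:
  assumes slice: "\<And>t. mixed_aux p H k (x(k := t)) = ennreal w * indicator {a<..<b} t"
    and w: "w \<ge> 0" and ab: "a < b" and p: "p k > 0"
  shows "mixed_aux p H (Suc k) x = ennreal (w * (b - a) powr inv_exp (p k))"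
proof (cases "p k = \<infinity>")
  case True
  then show ?thesis
    using ab by (simp add: slice esssup_indicator_interval[OF ab] inv_exp_def)
next
  case False
  define P where "P = enn2real (p k)"
  have P: "P > 0" "inv_exp (p k) = 1/P"
    unfolding P_def inv_exp_def using False p by (cases "p k"; simp)+
  have "epow (ennreal w * indicator {a<..<b} t) P = ennreal (w powr P) * indicator {a<..<b} t" for t
    using w P by (auto simp: indicator_def epow_ennreal)
  then have "(\<integral>\<^sup>+ t. epow (mixed_aux p H k (x(k := t))) P \<partial>lborel) = ennreal (w powr P * (b - a))"
    using w ab by (simp add: slice nn_integral_cmult_indicator ennreal_mult')
  moreover have "(w powr P * (b - a)) powr (1/P) = w * (b - a) powr (1/P)"
  proof -
    have "(w powr P) powr (1/P) = w"
      using w P by (cases "w = 0") (auto simp: powr_powr)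
    then show ?thesis
      using w ab by (subst powr_mult) auto
  qed
  ultimately show ?thesis
    using False w ab P by (simp add: epow_ennreal P_def)
qed

lemma mixed_aux_box_indicator:
  assumes c: "c \<ge> 0" and ab: "\<forall>i<n. a i < b i" and p: "\<forall>i<n. 0 < p i"
  shows "k \<le> n \<Longrightarrow> mixed_aux p (\<lambda>x. ennreal (c * box_indicator n a b x)) k x =
    ennreal (c * (\<Prod>i<k. (b i - a i) powr inv_exp (p i))
      * (\<Prod>i\<in>{k..<n}. indicator {a i<..<b i} (x i)))"
proof (induction k arbitrary: x)
  case 0
  then show ?case by (simp add: box_indicator_def atLeast0LessThan)
next
  case (Suc k)
  then have k: "k < n" by simp
  define V where "V = c * (\<Prod>i<k. (b i - a i) powr inv_exp (p i))"
  define R where "R = (\<Prod>i\<in>{Suc k..<n}. indicator {a i<..<b i} (x i) :: real)"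
  have VR: "V * R \<ge> 0"
    unfolding V_def R_def using c by (intro mult_nonneg_nonneg prod_nonneg) auto
  have ins: "{k..<n} = insert k {Suc k..<n}"
    using k by auto
  have split: "(\<Prod>i\<in>{k..<n}. indicator {a i<..<b i} ((x(k := t)) i) :: real)
      = indicator {a k<..<b k} t * R" for t
    unfolding ins R_def by (subst prod.insert) (auto intro!: prod.cong)
  have "mixed_aux p (\<lambda>x. ennreal (c * box_indicator n a b x)) k (x(k := t))
      = ennreal (V * R) * indicator {a k<..<b k} t" for t
  proof -
    have "mixed_aux p (\<lambda>x. ennreal (c * box_indicator n a b x)) k (x(k := t))
        = ennreal (V * (indicator {a k<..<b k} t * R))"
      unfolding V_def split[symmetric] using k by (intro Suc.IH) simp
    then show ?thesis
      by (simp add: indicator_def)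
  qed
  from mixed_aux_Suc_of_indicator_slice[OF this VR] ab p k show ?case
    by (simp add: V_def R_def mult_ac)
qed

lemma mixed_norm_box_indicator:
  assumes "c \<ge> 0" "\<forall>i<n. a i < b i" "\<forall>i<n. 0 < p i"
  shows "mixed_norm n p (\<lambda>x. ennreal (c * box_indicator n a b x))
    = ennreal (c * (\<Prod>i<n. (b i - a i) powr inv_exp (p i)))"
  unfolding mixed_norm_def using mixed_aux_box_indicator[OF assms order.refl] by simp

lemma Youngs_inequality_scaled:
  fixes u c d P Q :: real
  assumes "P > 1" "Q > 1" "1/P + 1/Q = 1" "u \<ge> 0" "c > 0" "d > 0"
  shows "u \<le> c * d * (u powr P / (P * c powr P) + 1 / (Q * d powr Q))"
proof -
  have "u / c * (1 / d) \<le> (u / c) powr P / P + (1 / d) powr Q / Q"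
    using assms by (intro Youngs_inequality) auto
  also have "\<dots> = u powr P / (P * c powr P) + 1 / (Q * d powr Q)"
    using assms by (simp add: powr_divide mult.commute)
  finally show ?thesis
    using assms(5,6) by (simp add: field_simps)
qed

lemma Youngs_inequality_ennreal:
  fixes x :: ennreal and c d P Q :: real
  assumes P: "P > 1" and Q: "Q > 1" and PQ: "1/P + 1/Q = 1" and c: "c > 0" and d: "d > 0"
  shows "x \<le> ennreal (c * d / (P * c powr P)) * epow x P + ennreal (c * d / (Q * d powr Q))"
proof (cases x)
  case (real u)
  then have "u \<le> c * d * (u powr P / (P * c powr P) + 1 / (Q * d powr Q))"
    using Youngs_inequality_scaled[OF P Q PQ _ c d] by simp
  then show ?thesis
    using real P Q c d by (simp add: epow_ennreal field_simps flip: ennreal_mult' ennreal_plus)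
next
  case top
  then show ?thesis
    using P c d by (simp add: epow_def ennreal_mult_top)
qed

lemma nn_integral_Holder_interval_pos:
  fixes M :: "real \<Rightarrow> ennreal" and P a b A :: real
  assumes M: "M \<in> borel_measurable lborel" and P: "P > 1" and ab: "a < b"
    and supp: "\<And>t. t \<notin> {a<..<b} \<Longrightarrow> M t = 0"
    and A: "(\<integral>\<^sup>+t. epow (M t) P \<partial>lborel) = ennreal A" "A > 0"
  shows "(\<integral>\<^sup>+t. M t \<partial>lborel) \<le> ennreal ((b - a) powr (1 - 1/P) * A powr (1/P))"
proof -
  define Q where "Q = P / (P - 1)"
  define l where "l = b - a"
  define c where "c = A powr (1/P)"
  define d where "d = l powr (1/Q)"
  have l: "l > 0" and Q: "Q > 1" and PQ: "1/P + 1/Q = 1"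
    using P ab by (auto simp: l_def Q_def field_simps)
  have c: "c > 0" "c powr P = A" and d: "d > 0" "d powr Q = l"
    using A(2) l P Q by (auto simp: c_def d_def powr_powr)
  have "M t \<le> ennreal (c * d / (P * A)) * epow (M t) P + ennreal (c * d / (Q * l)) * indicator {a<..<b} t" for t
    using Youngs_inequality_ennreal[OF P Q PQ c(1) d(1), of "M t"] supp[of t] c d
    by (cases "t \<in> {a<..<b}") auto
  then have "(\<integral>\<^sup>+t. M t \<partial>lborel) \<le> (\<integral>\<^sup>+t. ennreal (c * d / (P * A)) * epow (M t) P
      + ennreal (c * d / (Q * l)) * indicator {a<..<b} t \<partial>lborel)"
    by (rule nn_integral_mono)
  also have "\<dots> = ennreal (c * d / (P * A)) * ennreal A + ennreal (c * d / (Q * l)) * ennreal l"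
    using M ab A(1) by (subst nn_integral_add) (auto simp: nn_integral_cmult nn_integral_cmult_indicator l_def)
  also have "\<dots> = ennreal (c * d)"
    using A(2) l P Q PQ c d by (simp add: field_simps flip: ennreal_mult' ennreal_plus)
  also have "c * d = (b - a) powr (1 - 1/P) * A powr (1/P)"
  proof -
    have "1/Q = 1 - 1/P"
      using PQ by simp
    then show ?thesis
      by (simp add: c_def d_def l_def)
  qed
  finally show ?thesis .
qed

lemma nn_integral_Holder_interval:
  fixes M :: "real \<Rightarrow> ennreal" and P a b :: real
  assumes M: "M \<in> borel_measurable lborel" and P: "P > 1" and ab: "a < b"
    and supp: "\<And>t. t \<notin> {a<..<b} \<Longrightarrow> M t = 0"
  shows "(\<integral>\<^sup>+t. M t \<partial>lborel)
    \<le> ennreal ((b - a) powr (1 - 1/P)) * epow (\<integral>\<^sup>+t. epow (M t) P \<partial>lborel) (1/P)"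
proof (cases "\<integral>\<^sup>+t. epow (M t) P \<partial>lborel")
  case top
  then show ?thesis
    using P ab by (simp add: epow_def ennreal_mult_top)
next
  case (real A)
  show ?thesis
  proof (cases "A = 0")
    case True
    then have "AE t in lborel. epow (M t) P = 0"
      using real M by (subst nn_integral_0_iff_AE[symmetric]) auto
    then have "AE t in lborel. M t = 0"
      using P by (auto simp: epow_eq_0_iff)
    then have "(\<integral>\<^sup>+t. M t \<partial>lborel) = 0"
      using M by (subst nn_integral_0_iff_AE) auto
    then show ?thesis by simp
  next
    case False
    then show ?thesis
      using nn_integral_Holder_interval_pos[OF M P ab supp] real
      by (simp add: epow_ennreal ennreal_mult')
  qed
qed

definition merge_prefix :: "nat \<Rightarrow> (nat \<Rightarrow> real) \<Rightarrow> (nat \<Rightarrow> real) \<Rightarrow> (nat \<Rightarrow> real)" where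
  "merge_prefix k z x = (\<lambda>i. if i < k then z i else x i)"

lemma measurable_merge_prefix:
  assumes "x \<in> space (Rn n)" "k \<le> n"
  shows "(\<lambda>z. merge_prefix k z x) \<in> measurable (PiM {..<k} (\<lambda>_. lborel)) (Rn n)"
  unfolding Rn_def merge_prefix_def
proof (rule measurable_PiM_single')
  show "(\<lambda>z. if i < k then z i else x i) \<in> measurable (PiM {..<k} (\<lambda>_. lborel)) lborel" for i
    by (cases "i < k") auto
qed (use assms in \<open>auto simp: space_Rn space_PiM PiE_def extensional_def\<close>)

lemma merge_prefix_Suc_fun_upd: "merge_prefix (Suc k) (z(k := t)) x = merge_prefix k z (x(k := t))"
  by (auto simp: merge_prefix_def)

lemma nn_integral_merge_prefix_Suc:
  assumes H: "H \<in> borel_measurable (Rn n)" and x: "x \<in> space (Rn n)" and k: "Suc k \<le> n"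
  shows "(\<integral>\<^sup>+ z. H (merge_prefix (Suc k) z x) \<partial>PiM {..<Suc k} (\<lambda>_. lborel))
    = (\<integral>\<^sup>+ t. (\<integral>\<^sup>+ z. H (merge_prefix k z (x(k := t))) \<partial>PiM {..<k} (\<lambda>_. lborel)) \<partial>lborel)"
proof -
  interpret product_sigma_finite "\<lambda>_. lborel"
    by (rule product_sigma_finite_lborel)
  have ins: "{..<Suc k} = insert k {..<k}"
    by auto
  have "(\<lambda>w. H (merge_prefix (Suc k) w x)) \<in> borel_measurable (PiM (insert k {..<k}) (\<lambda>_. lborel))"
    using measurable_comp[OF measurable_merge_prefix[OF x k] H] by (simp add: o_def ins)
  from product_nn_integral_insert_rev[OF _ _ this] show ?thesis
    by (simp add: ins merge_prefix_Suc_fun_upd)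
qed

lemma nn_integral_merge_prefix_le_mixed_aux:
  assumes H: "H \<in> borel_measurable (Rn n)"
    and ab: "\<forall>i<n. a i < b i"
    and supp: "\<And>x. (\<exists>i<n. x i \<notin> {a i<..<b i}) \<Longrightarrow> H x = 0"
    and q: "\<forall>i<n. 1 < q i \<and> q i < \<infinity>"
  shows "k \<le> n \<Longrightarrow> x \<in> space (Rn n) \<Longrightarrow>
    (\<integral>\<^sup>+ z. H (merge_prefix k z x) \<partial>PiM {..<k} (\<lambda>_. lborel))
      \<le> ennreal (\<Prod>i<k. (b i - a i) powr (1 - inv_exp (q i))) * mixed_aux q H k x"
proof (induction k arbitrary: x)
  case 0
  then show ?case
    by (simp add: nn_integral_empty merge_prefix_def space_PiM PiE_empty_domain)
next
  case (Suc k)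
  have k: "k < n" and x: "x \<in> space (Rn n)"
    using Suc.prems by auto
  define Q where "Q = enn2real (q k)"
  have Q: "Q > 1" "inv_exp (q k) = 1 / Q"
    using q k unfolding Q_def inv_exp_def by (cases "q k"; auto)+
  have q_k: "q k \<noteq> \<infinity>" and ab_k: "a k < b k"
    using q ab k by auto
  define M where "M t = mixed_aux q H k (x(k := t))" for t
  have M: "M \<in> borel_measurable lborel"
    unfolding M_def by (rule borel_measurable_mixed_aux_slice[OF H x k])
  have M_supp: "M t = 0" if "t \<notin> {a k<..<b k}" for t
    unfolding M_def by (rule mixed_aux_eq_0_outside_box[OF supp, where j=k]) (use k that in auto)
  have "(\<integral>\<^sup>+ z. H (merge_prefix (Suc k) z x) \<partial>PiM {..<Suc k} (\<lambda>_. lborel))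
      = (\<integral>\<^sup>+ t. (\<integral>\<^sup>+ z. H (merge_prefix k z (x(k := t))) \<partial>PiM {..<k} (\<lambda>_. lborel)) \<partial>lborel)"
    by (rule nn_integral_merge_prefix_Suc[OF H x Suc.prems(1)])
  also have "\<dots> \<le> (\<integral>\<^sup>+ t. ennreal (\<Prod>i<k. (b i - a i) powr (1 - inv_exp (q i))) * M t \<partial>lborel)"
    unfolding M_def
  proof (rule nn_integral_mono)
    show "(\<integral>\<^sup>+ z. H (merge_prefix k z (x(k := t))) \<partial>PiM {..<k} (\<lambda>_. lborel))
        \<le> ennreal (\<Prod>i<k. (b i - a i) powr (1 - inv_exp (q i))) * mixed_aux q H k (x(k := t))" for t
      using k by (intro Suc.IH fun_upd_in_space_Rn[OF x k]) simp
  qed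
  also have "\<dots> = ennreal (\<Prod>i<k. (b i - a i) powr (1 - inv_exp (q i))) * (\<integral>\<^sup>+ t. M t \<partial>lborel)"
    using M by (simp add: nn_integral_cmult)
  also have "\<dots> \<le> ennreal (\<Prod>i<k. (b i - a i) powr (1 - inv_exp (q i)))
      * (ennreal ((b k - a k) powr (1 - 1/Q)) * epow (\<integral>\<^sup>+t. epow (M t) Q \<partial>lborel) (1/Q))"
    by (intro mult_left_mono nn_integral_Holder_interval[OF M Q(1) ab_k] M_supp) auto
  also have "\<dots> = ennreal (\<Prod>i<Suc k. (b i - a i) powr (1 - inv_exp (q i))) * mixed_aux q H (Suc k) x"
    using q_k Q ab by (simp add: M_def Q_def mult.assoc ennreal_mult' prod_nonneg less_imp_le)
  finally show ?case .
qed

lemma nn_integral_le_mixed_norm: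
  assumes "H \<in> borel_measurable (Rn n)"
    and "\<forall>i<n. a i < b i"
    and "\<And>x. (\<exists>i<n. x i \<notin> {a i<..<b i}) \<Longrightarrow> H x = 0"
    and "\<forall>i<n. 1 < q i \<and> q i < \<infinity>"
  shows "(\<integral>\<^sup>+ z. H z \<partial>Rn n) \<le> ennreal (\<Prod>i<n. (b i - a i) powr (1 - inv_exp (q i))) * mixed_norm n q H"
proof -
  have "(\<integral>\<^sup>+ z. H z \<partial>Rn n) = (\<integral>\<^sup>+ z. H (merge_prefix n z (\<lambda>_. undefined)) \<partial>Rn n)"
    by (intro nn_integral_cong arg_cong[where f=H])
      (auto simp: merge_prefix_def space_Rn PiE_def extensional_def)
  also have "\<dots> \<le> ennreal (\<Prod>i<n. (b i - a i) powr (1 - inv_exp (q i))) * mixed_norm n q H"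
    unfolding mixed_norm_def Rn_def
    by (rule nn_integral_merge_prefix_le_mixed_aux[OF assms order.refl undefined_in_space_Rn])
  finally show ?thesis .
qed

section \<open>Estimates for the amalgam norm\<close>

lemma borel_measurable_loc_int:
  assumes "loc_int n b"
  shows "b \<in> borel_measurable (Rn n)"
proof (rule borel_measurable_LIMSEQ_real)
  let ?y = "(\<lambda>_. undefined) :: nat \<Rightarrow> real"
  show "(\<lambda>x. indicator (eball n ?y (Suc k)) x *\<^sub>R b x) \<in> borel_measurable (Rn n)" for k
  proof -
    have "set_integrable (Rn n) (eball n ?y (Suc k)) b"
      using assms undefined_in_space_Rn unfolding loc_int_def by auto
    then show ?thesis
      unfolding set_integrable_def by (rule borel_measurable_integrable)
  qed
  fix x assume x: "x \<in> space (Rn n)"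
  obtain N :: nat where "edist n x ?y < N"
    using reals_Archimedean2 by blast
  then have "eventually (\<lambda>k. indicator (eball n ?y (Suc k)) x *\<^sub>R b x = b x) sequentially"
    using x by (intro eventually_sequentiallyI[of N]) (auto simp: eball_def)
  then show "(\<lambda>k. indicator (eball n ?y (Suc k)) x *\<^sub>R b x) \<longlonglongrightarrow> b x"
    by (rule tendsto_eventually)
qed

lemma loc_int_indicator:
  assumes "E \<in> sets (Rn n)"
  shows "loc_int n (indicator E)"
  unfolding loc_int_def set_integrable_def
proof (intro ballI allI impI)
  fix y :: "nat \<Rightarrow> real" and \<rho> :: real assume "\<rho> > 0"
  then have "emeasure (Rn n) (eball n y \<rho> \<inter> E) < \<infinity>"
    using emeasure_eball_less_top[of \<rho> n y] emeasure_mono[of "eball n y \<rho> \<inter> E" "eball n y \<rho>" "Rn n"]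
    by (auto simp: le_less_trans)
  then have "integrable (Rn n) (indicator (eball n y \<rho> \<inter> E) :: _ \<Rightarrow> real)"
    using assms by (intro integrable_real_indicator) auto
  moreover have "(\<lambda>x. indicator (eball n y \<rho>) x *\<^sub>R indicator E x :: real) = indicator (eball n y \<rho> \<inter> E)"
    by (auto simp: indicator_def)
  ultimately show "integrable (Rn n) (\<lambda>x. indicator (eball n y \<rho>) x *\<^sub>R indicator E x :: real)"
    by simp
qed

lemma loc_int_uminus: "loc_int n b \<Longrightarrow> loc_int n (\<lambda>x. - b x)"
  unfolding loc_int_def set_integrable_def by simp

definition amalgam_profile ::
    "nat \<Rightarrow> (nat \<Rightarrow> ennreal) \<Rightarrow> (nat \<Rightarrow> ennreal) \<Rightarrow> real \<Rightarrow> ((nat \<Rightarrow> real) \<Rightarrow> real) \<Rightarrow> real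
      \<Rightarrow> (nat \<Rightarrow> real) \<Rightarrow> ennreal" where
  "amalgam_profile n p s \<alpha> f r y =
     ennreal (vol n (eball n y r) powr (1/\<alpha> - avg_inv n p - avg_inv n s))
       * mixed_norm n p (\<lambda>x. ennreal (indicator (eball n y r) x * \<bar>f x\<bar>))"

lemma amalgam_norm_eq_SUP:
  "amalgam_norm n p s \<alpha> f = (SUP r\<in>{0<..}. mixed_norm n s (amalgam_profile n p s \<alpha> f r))"
  unfolding amalgam_norm_def amalgam_profile_def ..

lemma borel_measurable_vol_eball: "(\<lambda>y. vol n (eball n y \<rho>)) \<in> borel_measurable (Rn n)"
proof -
  interpret sigma_finite_measure "Rn n"
    by (rule sigma_finite_Rn)
  define Q where "Q = {w \<in> space (Rn n \<Otimes>\<^sub>M Rn n). edist n (snd w) (fst w) < \<rho>}"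
  have "Q \<in> sets (Rn n \<Otimes>\<^sub>M Rn n)"
    unfolding Q_def by measurable
  then have "(\<lambda>y. enn2real (emeasure (Rn n) (Pair y -` Q))) \<in> borel_measurable (Rn n)"
    using measurable_emeasure_Pair by measurable
  moreover have "enn2real (emeasure (Rn n) (Pair y -` Q)) = vol n (eball n y \<rho>)"
    if "y \<in> space (Rn n)" for y
    using that unfolding vol_def measure_def Q_def eball_def
    by (auto simp: space_pair_measure intro!: arg_cong[where f="\<lambda>A. enn2real (emeasure (Rn n) A)"])
  ultimately show ?thesis
    by (rule measurable_cong[THEN iffD1, rotated])
qed

lemma borel_measurable_amalgam_profile:
  assumes "f \<in> borel_measurable (Rn n)"
  shows "amalgam_profile n p s \<alpha> f \<rho> \<in> borel_measurable (Rn n)"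
proof -
  have "(\<lambda>w. ennreal (indicator {w \<in> space (Rn n \<Otimes>\<^sub>M Rn n). edist n (snd w) (fst w) < \<rho>} w
      * \<bar>f (snd w)\<bar>)) \<in> borel_measurable (Rn n \<Otimes>\<^sub>M Rn n)"
    using assms by measurable
  then have "(\<lambda>(y, x). ennreal (indicator (eball n y \<rho>) x * \<bar>f x\<bar>)) \<in> borel_measurable (Rn n \<Otimes>\<^sub>M Rn n)"
    by (rule measurable_cong[THEN iffD1, rotated])
      (auto simp: eball_def space_pair_measure indicator_def split: prod.splits)
  from borel_measurable_mixed_norm_param[OF this] show ?thesis
    unfolding amalgam_profile_def using borel_measurable_vol_eball by measurable
qed

lemma vol_eball_powr_bounds:
  assumes "n \<ge> 1" "\<rho> > 0"
  shows "min ((2/n) powr (n*e)) (2 powr (n*e)) * \<rho> powr (n*e) \<le> vol n (eball n y \<rho>) powr e"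
    and "vol n (eball n y \<rho>) powr e \<le> max ((2/n) powr (n*e)) (2 powr (n*e)) * \<rho> powr (n*e)"
proof -
  have lo: "(2*\<rho>/n)^n \<le> vol n (eball n y \<rho>)" and hi: "vol n (eball n y \<rho>) \<le> (2*\<rho>)^n"
    using vol_eball_bounds[OF assms] by auto
  have pos: "0 < (2*\<rho>/n)^n"
    using assms by simp
  have power_powr: "(x^n) powr e = x powr (n*e)" if "x > 0" for x :: real
    using that by (simp add: powr_realpow[symmetric] powr_powr)
  have "((2*\<rho>/n)^n) powr e = ((2/n) * \<rho>) powr (n*e)"
    using assms power_powr[of "2*\<rho>/n"] by simp
  also have "\<dots> = (2/n) powr (n*e) * \<rho> powr (n*e)"
    using assms by (intro powr_mult)
  finally have lo_e: "((2*\<rho>/n)^n) powr e = (2/n) powr (n*e) * \<rho> powr (n*e)" .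
  have hi_e: "((2*\<rho>)^n) powr e = 2 powr (n*e) * \<rho> powr (n*e)"
    using assms power_powr[of "2*\<rho>"] by (simp add: powr_mult)
  show "min ((2/n) powr (n*e)) (2 powr (n*e)) * \<rho> powr (n*e) \<le> vol n (eball n y \<rho>) powr e"
  proof (cases "e \<ge> 0")
    case True
    then show ?thesis
      using powr_mono2[OF True _ lo] pos lo_e by (simp add: min_mult_distrib_right)
  next
    case False
    then show ?thesis
      using powr_mono2'[of e _ "(2*\<rho>)^n", OF _ _ hi] pos lo hi_e
      by (simp add: min_mult_distrib_right)
  qed
  show "vol n (eball n y \<rho>) powr e \<le> max ((2/n) powr (n*e)) (2 powr (n*e)) * \<rho> powr (n*e)"
  proof (cases "e \<ge> 0")
    case True
    then show ?thesis
      using powr_mono2[OF True _ hi] pos lo hi_e by (simp add: max_mult_distrib_right)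
  next
    case False
    then show ?thesis
      using powr_mono2'[of e _ _, OF _ pos lo] lo_e by (simp add: max_mult_distrib_right)
  qed
qed

lemma mixed_norm_le_indicator_eball:
  assumes G: "G \<in> borel_measurable (Rn n)" "\<And>x. G x \<le> ennreal (indicator (eball n y \<rho>) x)"
    and "\<rho> > 0" "\<forall>i<n. 0 < p i"
  shows "mixed_norm n p G \<le> ennreal ((2*\<rho>) powr (\<Sum>i<n. inv_exp (p i)))"
proof -
  have "mixed_norm n p G \<le> mixed_norm n p (\<lambda>x. ennreal (1 * box_indicator n (\<lambda>i. y i - \<rho>) (\<lambda>i. y i + \<rho>) x))"
  proof (rule mixed_norm_mono[OF _ G(1)])
    show "G x \<le> ennreal (1 * box_indicator n (\<lambda>i. y i - \<rho>) (\<lambda>i. y i + \<rho>) x)" for x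
      using order_trans[OF G(2) ennreal_leI[OF indicator_eball_le_box_indicator]] by simp
  qed
  also have "\<dots> = ennreal ((2*\<rho>) powr (\<Sum>i<n. inv_exp (p i)))"
    using mixed_norm_box_indicator[of 1 n "\<lambda>i. y i - \<rho>" "\<lambda>i. y i + \<rho>" p] assms(3,4)
    by (simp add: powr_sum)
  finally show ?thesis .
qed

lemma ennreal_mult_le_if_real_le:
  fixes N X :: ennreal
  assumes L: "L > 0" and le: "\<And>c. c \<ge> 0 \<Longrightarrow> ennreal c \<le> N \<Longrightarrow> ennreal (c * L) \<le> X"
  shows "ennreal L * N \<le> X"
proof (cases N)
  case (real c)
  then show ?thesis
    using le[of c] L by (simp add: ennreal_mult' mult.commute)
next
  case top
  have "X = \<infinity>"
  proof (rule ccontr)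
    assume "X \<noteq> \<infinity>"
    then obtain x where x: "X = ennreal x" "x \<ge> 0"
      by (cases X) auto
    have "ennreal (x + 1) \<le> ennreal x"
      using le[of "(x + 1) / L"] top x L by simp
    then show False
      using x(2) by (simp add: ennreal_le_iff)
  qed
  then show ?thesis by simp
qed

lemma amalgam_profile_ge_box_indicator:
  fixes \<beta> :: real and s :: "nat \<Rightarrow> ennreal"
  assumes n: "n \<ge> 1" and r: "r > 0" and g: "g \<in> borel_measurable (Rn n)"
    and c: "c \<ge> 0" "ennreal c \<le> mixed_norm n q (\<lambda>x. ennreal (indicator (eball n y0 r) x * \<bar>g x\<bar>))"
  defines "e \<equiv> 1/\<beta> - avg_inv n q - avg_inv n s"
  shows "ennreal (c * (min ((2/n) powr (n*e)) (2 powr (n*e)) * (2*r) powr (n*e))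
      * box_indicator n (\<lambda>i. y0 i - r/n) (\<lambda>i. y0 i + r/n) y) \<le> amalgam_profile n q s \<beta> g (2*r) y"
proof (cases "\<forall>i<n. y i \<in> {y0 i - r/n<..<y0 i + r/n}")
  case False
  then show ?thesis
    by (auto simp: box_indicator_eq_0)
next
  case True
  then have "\<forall>i<n. \<bar>y0 i - y i\<bar> < r/n"
    by (auto simp: abs_less_iff)
  then have "edist n y0 y < r"
    by (rule edist_less_of_components[OF n r])
  then have "indicator (eball n y0 r) x \<le> (indicator (eball n y (2*r)) x :: real)" for x
    using edist_triangle[of n x y y0] by (auto simp: eball_def indicator_def)
  then have "mixed_norm n q (\<lambda>x. ennreal (indicator (eball n y0 r) x * \<bar>g x\<bar>))
      \<le> mixed_norm n q (\<lambda>x. ennreal (indicator (eball n y (2*r)) x * \<bar>g x\<bar>))"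
    using g by (intro mixed_norm_mono ennreal_leI mult_right_mono) auto
  then have "ennreal c \<le> mixed_norm n q (\<lambda>x. ennreal (indicator (eball n y (2*r)) x * \<bar>g x\<bar>))"
    using c(2) by (rule order_trans[rotated])
  moreover have "min ((2/n) powr (n*e)) (2 powr (n*e)) * (2*r) powr (n*e) \<le> vol n (eball n y (2*r)) powr e"
    using vol_eball_powr_bounds(1)[OF n, of "2*r"] r by simp
  ultimately have "ennreal c * ennreal (min ((2/n) powr (n*e)) (2 powr (n*e)) * (2*r) powr (n*e))
      \<le> amalgam_profile n q s \<beta> g (2*r) y"
    unfolding amalgam_profile_def e_def
    by (subst mult.commute) (intro mult_mono ennreal_leI; simp)
  then show ?thesis
    using True c(1) by (simp add: box_indicator_eq_1 ennreal_mult)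
qed

lemma amalgam_norm_ge_of_mixed_norm_eball_ge:
  fixes \<beta> :: real
  assumes n: "n \<ge> 1" and r: "r > 0" and g: "g \<in> borel_measurable (Rn n)" and s: "\<forall>i<n. 0 < s i"
    and c: "c \<ge> 0" "ennreal c \<le> mixed_norm n q (\<lambda>x. ennreal (indicator (eball n y0 r) x * \<bar>g x\<bar>))"
  defines "e \<equiv> 1/\<beta> - avg_inv n q - avg_inv n s"
  shows "ennreal (c * (min ((2/n) powr (n*e)) (2 powr (n*e)) * (2*r) powr (n*e))
      * (\<Prod>i<n. (2*r/n) powr inv_exp (s i))) \<le> amalgam_norm n q s \<beta> g"
proof -
  define v where "v = min ((2/n) powr (n*e)) (2 powr (n*e)) * (2*r) powr (n*e)"
  have "mixed_norm n s (\<lambda>y. ennreal (c * v * box_indicator n (\<lambda>i. y0 i - r/n) (\<lambda>i. y0 i + r/n) y))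
      \<le> mixed_norm n s (amalgam_profile n q s \<beta> g (2*r))"
    using amalgam_profile_ge_box_indicator[OF n r g c] unfolding v_def e_def
    by (intro mixed_norm_mono) (simp_all add: mult.assoc)
  also have "\<dots> \<le> amalgam_norm n q s \<beta> g"
    unfolding amalgam_norm_eq_SUP using r by (intro SUP_upper) auto
  finally show ?thesis
    using mixed_norm_box_indicator[OF _ _ s, of "c * v" "\<lambda>i. y0 i - r/n" "\<lambda>i. y0 i + r/n"] c(1) r n
    unfolding v_def by simp
qed

lemma amalgam_norm_ge_mixed_norm_eball:
  assumes n: "n \<ge> 1" and s: "\<forall>i<n. 0 < s i"
  obtains L where "L > 0"
    and "\<And>r y g. r > 0 \<Longrightarrow> g \<in> borel_measurable (Rn n) \<Longrightarrow>
      ennreal (L * r powr (real n / \<beta> - (\<Sum>i<n. inv_exp (q i))))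
        * mixed_norm n q (\<lambda>x. ennreal (indicator (eball n y r) x * \<bar>g x\<bar>))
      \<le> amalgam_norm n q s \<beta> g"
proof -
  define e where "e = 1/\<beta> - avg_inv n q - avg_inv n s"
  define S where "S = (\<Sum>i<n. inv_exp (s i))"
  define L where "L = min ((2 / real n) powr (real n * e)) (2 powr (real n * e)) * 2 powr (real n * e) * (2 / real n) powr S"
  have ne: "real n * e = real n / \<beta> - (\<Sum>i<n. inv_exp (q i)) - S"
    using n unfolding e_def S_def avg_inv_def by (simp add: field_simps)
  show thesis
  proof
    show "L > 0"
      unfolding L_def using n by simp
    fix r :: real and y and g :: "(nat \<Rightarrow> real) \<Rightarrow> real"
    assume r: "r > 0" and g: "g \<in> borel_measurable (Rn n)"
    have "(min ((2 / real n) powr (real n * e)) (2 powr (real n * e)) * (2*r) powr (real n * e)) * (\<Prod>i<n. (2*r / real n) powr inv_exp (s i))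
        = L * r powr (real n / \<beta> - (\<Sum>i<n. inv_exp (q i)))"
    proof -
      have "(\<Prod>i<n. (2*r / real n) powr inv_exp (s i)) = (2 / real n) powr S * r powr S"
        using r n by (simp add: S_def powr_sum[symmetric] powr_mult[symmetric])
      moreover have "(2*r) powr (real n * e) = 2 powr (real n * e) * r powr (real n * e)"
        using r by (simp add: powr_mult)
      moreover have "r powr (real n * e) * r powr S = r powr (real n / \<beta> - (\<Sum>i<n. inv_exp (q i)))"
        by (simp add: ne powr_add[symmetric])
      ultimately show ?thesis
        unfolding L_def by (simp add: ac_simps)
    qed
    then have "ennreal (c * (L * r powr (real n / \<beta> - (\<Sum>i<n. inv_exp (q i))))) \<le> amalgam_norm n q s \<beta> g"
      if "c \<ge> 0" "ennreal c \<le> mixed_norm n q (\<lambda>x. ennreal (indicator (eball n y r) x * \<bar>g x\<bar>))" for c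
      using amalgam_norm_ge_of_mixed_norm_eball_ge[OF n r g s that, where \<beta>=\<beta>]
      unfolding e_def by (simp add: mult.assoc)
    then show "ennreal (L * r powr (real n / \<beta> - (\<Sum>i<n. inv_exp (q i))))
        * mixed_norm n q (\<lambda>x. ennreal (indicator (eball n y r) x * \<bar>g x\<bar>))
      \<le> amalgam_norm n q s \<beta> g"
      using \<open>L > 0\<close> r by (intro ennreal_mult_le_if_real_le) auto
  qed
qed

lemma powr_min_scaling_le:
  fixes \<rho> r A P S :: real
  assumes "\<rho> > 0" "r > 0" "0 \<le> S" "S \<le> A" "A \<le> P"
  shows "\<rho> powr (A - P - S) * min (\<rho> powr P) (r powr P) * (\<rho> + r) powr S \<le> 2 powr S * r powr A"
proof (cases "\<rho> \<le> r")
  case True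
  have "\<rho> powr (A - P - S) * min (\<rho> powr P) (r powr P) * (\<rho> + r) powr S
      \<le> \<rho> powr (A - P - S) * \<rho> powr P * (2 * r) powr S"
    using assms True powr_mono2[of S "\<rho> + r" "2 * r"] by (intro mult_mono) auto
  also have "\<dots> = \<rho> powr (A - S) * 2 powr S * r powr S"
    using assms by (simp add: powr_mult powr_add[symmetric])
  also have "\<dots> \<le> r powr (A - S) * 2 powr S * r powr S"
    using assms True powr_mono2[of "A - S" \<rho> r] by (intro mult_right_mono) auto
  also have "\<dots> = 2 powr S * (r powr (A - S) * r powr S)"
    by (simp add: mult_ac)
  finally show ?thesis
    by (simp add: powr_add[symmetric])
next
  case False
  have "\<rho> powr (A - P - S) * min (\<rho> powr P) (r powr P) * (\<rho> + r) powr S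
      \<le> \<rho> powr (A - P - S) * r powr P * (2 * \<rho>) powr S"
    using assms False powr_mono2[of S "\<rho> + r" "2 * \<rho>"] by (intro mult_mono) auto
  also have "\<dots> = \<rho> powr (A - P) * 2 powr S * r powr P"
    using assms by (simp add: powr_mult powr_add[symmetric])
  also have "\<dots> \<le> r powr (A - P) * 2 powr S * r powr P"
    using assms False powr_mono2'[of "A - P" r \<rho>] by (intro mult_right_mono) auto
  also have "\<dots> = 2 powr S * (r powr (A - P) * r powr P)"
    by (simp add: mult_ac)
  finally show ?thesis
    by (simp add: powr_add[symmetric])
qed

lemma amalgam_profile_indicator_le:
  fixes \<alpha> :: real and s :: "nat \<Rightarrow> ennreal"
  assumes n: "n \<ge> 1" and p: "\<forall>i<n. 0 < p i" and \<rho>: "\<rho> > 0" and r: "r > 0"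
    and E: "E \<in> sets (Rn n)" "E \<subseteq> eball n y r"
  defines "e \<equiv> 1/\<alpha> - avg_inv n p - avg_inv n s" and "P \<equiv> \<Sum>i<n. inv_exp (p i)"
  shows "amalgam_profile n p s \<alpha> (indicator E) \<rho> z
    \<le> ennreal (max ((2/n) powr (n*e)) (2 powr (n*e)) * \<rho> powr (n*e) * min ((2*\<rho>) powr P) ((2*r) powr P)
      * box_indicator n (\<lambda>i. y i - (\<rho> + r)) (\<lambda>i. y i + (\<rho> + r)) z)"
proof (cases "\<forall>i<n. z i \<in> {y i - (\<rho> + r)<..<y i + (\<rho> + r)}")
  case False
  then obtain i where i: "i < n" "z i \<notin> {y i - (\<rho> + r)<..<y i + (\<rho> + r)}"
    by auto
  have zero: "indicator (eball n z \<rho>) x * \<bar>indicator E x\<bar> = (0::real)" for x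
  proof (cases "x \<in> eball n z \<rho> \<and> x \<in> E")
    case True
    then have "\<bar>x i - z i\<bar> < \<rho>" "\<bar>x i - y i\<bar> < r"
      using E(2) abs_component_le_edist[OF i(1), of x z] abs_component_le_edist[OF i(1), of x y]
      by (auto simp: eball_def)
    then show ?thesis
      using i by (auto simp: abs_less_iff)
  qed auto
  have "(\<lambda>x. ennreal (indicator (eball n z \<rho>) x * \<bar>indicator E x\<bar>)) = (\<lambda>_. 0)"
    by (simp only: zero ennreal_0)
  then show ?thesis
    by (simp add: amalgam_profile_def mixed_norm_def)
next
  case True
  let ?G = "\<lambda>x. ennreal (indicator (eball n z \<rho>) x * \<bar>indicator E x\<bar>)"
  have G: "?G \<in> borel_measurable (Rn n)"
    using E(1) by measurable
  have "mixed_norm n p ?G \<le> ennreal ((2*\<rho>) powr P)"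
    unfolding P_def using \<rho> p by (intro mixed_norm_le_indicator_eball[OF G]) (auto simp: indicator_def)
  moreover have "mixed_norm n p ?G \<le> ennreal ((2*r) powr P)"
    unfolding P_def using r p E(2) by (intro mixed_norm_le_indicator_eball[OF G]) (auto simp: indicator_def)
  moreover have "vol n (eball n z \<rho>) powr e \<le> max ((2/n) powr (n*e)) (2 powr (n*e)) * \<rho> powr (n*e)"
    by (rule vol_eball_powr_bounds(2)[OF n \<rho>])
  ultimately have "amalgam_profile n p s \<alpha> (indicator E) \<rho> z
      \<le> ennreal (max ((2/n) powr (n*e)) (2 powr (n*e)) * \<rho> powr (n*e)) * ennreal (min ((2*\<rho>) powr P) ((2*r) powr P))"
    unfolding amalgam_profile_def e_def by (intro mult_mono ennreal_leI) (auto simp: min_def)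
  also have "\<dots> = ennreal (max ((2/n) powr (n*e)) (2 powr (n*e)) * \<rho> powr (n*e) * min ((2*\<rho>) powr P) ((2*r) powr P))"
    by (intro ennreal_mult'[symmetric]) (simp add: le_max_iff_disj)
  finally show ?thesis
    using True by (simp add: box_indicator_eq_1)
qed

lemma mixed_norm_amalgam_profile_indicator_le:
  fixes \<alpha> :: real
  assumes n: "n \<ge> 1" and p: "\<forall>i<n. 0 < p i" and s: "\<forall>i<n. 0 < s i"
    and s_\<alpha>: "avg_inv n s \<le> 1/\<alpha>" and \<alpha>_p: "1/\<alpha> \<le> avg_inv n p"
    and \<rho>: "\<rho> > 0" and r: "r > 0" and E: "E \<in> sets (Rn n)" "E \<subseteq> eball n y r"
  defines "e \<equiv> 1/\<alpha> - avg_inv n p - avg_inv n s"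
    and "P \<equiv> \<Sum>i<n. inv_exp (p i)" and "S \<equiv> \<Sum>i<n. inv_exp (s i)"
  shows "mixed_norm n s (amalgam_profile n p s \<alpha> (indicator E) \<rho>)
    \<le> ennreal (max ((2/n) powr (n*e)) (2 powr (n*e)) * 2 powr P * 2 powr S * 2 powr S * r powr (n / \<alpha>))"
proof -
  define cmax where "cmax = max ((2/n) powr (n*e)) (2 powr (n*e))"
  define c where "c = cmax * \<rho> powr (n*e) * min ((2*\<rho>) powr P) ((2*r) powr P)"
  have ne: "n * e = n / \<alpha> - P - S"
    using n unfolding e_def P_def S_def avg_inv_def by (simp add: field_simps)
  have S: "0 \<le> S" "S \<le> n / \<alpha>" and P: "n / \<alpha> \<le> P"
    using n s_\<alpha> \<alpha>_p unfolding S_def P_def avg_inv_def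
    by (auto simp: field_simps inv_exp_def intro!: sum_nonneg)
  have cmax: "cmax \<ge> 0" and c: "c \<ge> 0"
    unfolding c_def cmax_def by (simp_all add: le_max_iff_disj)
  have "c * (2 * (\<rho> + r)) powr S
      = cmax * 2 powr P * 2 powr S * (\<rho> powr (n / \<alpha> - P - S) * min (\<rho> powr P) (r powr P) * (\<rho> + r) powr S)"
  proof -
    have "min ((2*\<rho>) powr P) ((2*r) powr P) = 2 powr P * min (\<rho> powr P) (r powr P)"
      using \<rho> r by (simp add: powr_mult min_mult_distrib_left)
    moreover have "(2 * (\<rho> + r)) powr S = 2 powr S * (\<rho> + r) powr S"
      using \<rho> r by (intro powr_mult)
    ultimately show ?thesis
      unfolding c_def ne by (simp add: mult_ac)
  qed
  also have "\<dots> \<le> cmax * 2 powr P * 2 powr S * (2 powr S * r powr (n / \<alpha>))"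
    using cmax by (intro mult_left_mono powr_min_scaling_le[OF \<rho> r S P]) auto
  finally have bound: "c * (2 * (\<rho> + r)) powr S \<le> cmax * 2 powr P * 2 powr S * 2 powr S * r powr (n / \<alpha>)"
    by (simp add: mult_ac)
  have "mixed_norm n s (amalgam_profile n p s \<alpha> (indicator E) \<rho>)
      \<le> mixed_norm n s (\<lambda>z. ennreal (c * box_indicator n (\<lambda>i. y i - (\<rho> + r)) (\<lambda>i. y i + (\<rho> + r)) z))"
    using amalgam_profile_indicator_le[OF n p \<rho> r E] E(1)
    unfolding c_def cmax_def e_def P_def by (intro mixed_norm_mono borel_measurable_amalgam_profile) auto
  also have "\<dots> = ennreal (c * (2 * (\<rho> + r)) powr S)"
    using mixed_norm_box_indicator[OF c _ s, of "\<lambda>i. y i - (\<rho> + r)" "\<lambda>i. y i + (\<rho> + r)"] \<rho> r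
    by (simp add: S_def powr_sum)
  also have "\<dots> \<le> ennreal (cmax * 2 powr P * 2 powr S * 2 powr S * r powr (n / \<alpha>))"
    using bound by (rule ennreal_leI)
  finally show ?thesis
    unfolding cmax_def .
qed

lemma amalgam_norm_indicator_le:
  assumes n: "n \<ge> 1" and p: "\<forall>i<n. 0 < p i" and s: "\<forall>i<n. 0 < s i"
    and s_\<alpha>: "avg_inv n s \<le> 1/\<alpha>" and \<alpha>_p: "1/\<alpha> \<le> avg_inv n p"
  obtains U where "U \<ge> 0"
    and "\<And>r y E. r > 0 \<Longrightarrow> E \<in> sets (Rn n) \<Longrightarrow> E \<subseteq> eball n y r \<Longrightarrow>
      amalgam_norm n p s \<alpha> (indicator E) \<le> ennreal (U * r powr (real n / \<alpha>))"
proof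
  define e where "e = 1/\<alpha> - avg_inv n p - avg_inv n s"
  show "max ((2/n) powr (n*e)) (2 powr (n*e)) * 2 powr (\<Sum>i<n. inv_exp (p i))
      * 2 powr (\<Sum>i<n. inv_exp (s i)) * 2 powr (\<Sum>i<n. inv_exp (s i)) \<ge> 0"
    by (simp add: le_max_iff_disj)
  show "amalgam_norm n p s \<alpha> (indicator E) \<le> ennreal (max ((2/n) powr (n*e)) (2 powr (n*e))
      * 2 powr (\<Sum>i<n. inv_exp (p i)) * 2 powr (\<Sum>i<n. inv_exp (s i)) * 2 powr (\<Sum>i<n. inv_exp (s i))
      * r powr (real n / \<alpha>))"
    if "r > 0" "E \<in> sets (Rn n)" "E \<subseteq> eball n y r" for r y E
    unfolding amalgam_norm_eq_SUP e_def
    using mixed_norm_amalgam_profile_indicator_le[OF n p s s_\<alpha> \<alpha>_p _ that] by (intro SUP_least) auto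
qed

section \<open>Medians\<close>

lemma (in finite_borel_measure) quantile_exists:
  assumes h: "0 < h" "h < measure M (space M)"
  obtains m where "h \<le> cdf M m" "measure M {..<m} \<le> h"
proof -
  define T where "T = {t. h \<le> cdf M t}"
  obtain t1 where "h < cdf M t1"
    using order_tendstoD(1)[OF cdf_lim_at_top h(2)] by (auto simp: eventually_at_top_linorder)
  then have T: "T \<noteq> {}"
    unfolding T_def by (auto intro: less_imp_le)
  obtain t0 where t0: "\<And>t. t \<le> t0 \<Longrightarrow> cdf M t < h"
    using order_tendstoD(2)[OF cdf_lim_at_bot h(1)] by (auto simp: eventually_at_bot_linorder)
  have "bdd_below T"
  proof (rule bdd_belowI)
    show "t0 \<le> t" if "t \<in> T" for t
      using t0[of t] that unfolding T_def by fastforce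
  qed
  define m where "m = Inf T"
  have "h \<le> cdf M m"
  proof (rule tendsto_lowerbound[OF cdf_is_right_cont[unfolded continuous_within]])
    have "h \<le> cdf M t" if "m < t" for t
    proof -
      obtain t' where "t' \<in> T" "t' < t"
        using cInf_lessD[OF T] \<open>m < t\<close> unfolding m_def by blast
      then show ?thesis
        unfolding T_def using cdf_nondecreasing[of t' t] by auto
    qed
    then show "\<forall>\<^sub>F t in at_right m. h \<le> cdf M t"
      by (auto simp: eventually_at_right_field intro: gt_ex)
  qed simp
  moreover have "measure M {..<m} \<le> h"
  proof (rule tendsto_upperbound[OF cdf_at_left])
    have "cdf M t \<le> h" if "t < m" for t
      using cInf_lower[OF _ \<open>bdd_below T\<close>, of t] that unfolding m_def T_def by force
    then show "\<forall>\<^sub>F t in at_left m. cdf M t \<le> h"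
      by (auto simp: eventually_at_left_field intro: lt_ex)
  qed simp
  ultimately show thesis
    by (rule that)
qed

lemma (in finite_borel_measure) median_exists:
  obtains m where "measure M (space M) / 2 \<le> measure M {..m}" "measure M (space M) / 2 \<le> measure M {m..}"
proof (cases "measure M (space M) = 0")
  case True
  then show thesis
    by (intro that[of 0]) auto
next
  case False
  then have "0 < measure M (space M) / 2" "measure M (space M) / 2 < measure M (space M)"
    by (auto simp: less_le)
  then obtain m where m: "measure M (space M) / 2 \<le> cdf M m" "measure M {..<m} \<le> measure M (space M) / 2"
    by (rule quantile_exists)
  moreover have "measure M (space M) / 2 \<le> measure M {m..}"
    using m(2) finite_measure_compl[of "{..<m}"] sets_M[of "{..<m}"]
    by (simp add: borel_UNIV Compl_eq_Diff_UNIV[symmetric] not_less[symmetric] cong: Collect_cong)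
  ultimately show thesis
    unfolding cdf_def by (intro that[of m])
qed

lemma median_exists_on_set:
  fixes b :: "'a \<Rightarrow> real"
  assumes b: "b \<in> borel_measurable M" and A: "A \<in> sets M" "emeasure M A < \<infinity>"
  obtains m where "measure M A / 2 \<le> measure M {x\<in>A. b x \<le> m}"
    and "measure M A / 2 \<le> measure M {x\<in>A. m \<le> b x}"
proof -
  define D where "D = distr (restrict_space M A) borel b"
  have b': "b \<in> measurable (restrict_space M A) borel"
    using b by (rule measurable_restrict_space1)
  have space: "space (restrict_space M A) = A"
    using sets.sets_into_space[OF A(1)] by (auto simp: space_restrict_space)
  have measure_D: "measure D X = measure M {x\<in>A. b x \<in> X}" if "X \<in> sets borel" for X
  proof -
    have "measure D X = measure (restrict_space M A) (b -` X \<inter> A)"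
      unfolding D_def using b' that space by (simp add: measure_distr)
    also have "\<dots> = measure M {x\<in>A. b x \<in> X}"
      using A(1) by (subst measure_restrict_space) (auto intro: arg_cong[where f="measure M"])
    finally show ?thesis .
  qed
  have "emeasure D (space D) = emeasure M A"
    unfolding D_def using b' A(1) space
    by (simp add: emeasure_distr emeasure_restrict_space Int_absorb2 sets.sets_into_space)
  then have "finite_measure D"
    using A(2) by (intro finite_measureI) auto
  then interpret finite_borel_measure D
    by (simp add: finite_borel_measure_def finite_borel_measure_axioms_def D_def)
  obtain m where "measure D (space D) / 2 \<le> measure D {..m}" "measure D (space D) / 2 \<le> measure D {m..}"
    by (rule median_exists)
  then show thesis
    using measure_D[of UNIV] measure_D[of "{..m}"] measure_D[of "{m..}"]
    by (intro that[of m]) (simp_all add: borel_UNIV)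
qed

section \<open>The commutator\<close>

lemma borel_measurable_commutator:
  assumes "b \<in> borel_measurable (Rn n)" "f \<in> borel_measurable (Rn n)"
  shows "commutator n C \<gamma> b f \<in> borel_measurable (Rn n)"
proof -
  interpret sigma_finite_measure "Rn n"
    by (rule sigma_finite_Rn)
  have "(\<lambda>w. (b (fst w) - b (snd w)) * f (snd w) / edist n (fst w) (snd w) powr (real n - \<gamma>))
      \<in> borel_measurable (Rn n \<Otimes>\<^sub>M Rn n)"
    using assms by measurable
  then have "(\<lambda>(x, y). (b x - b y) * f y / edist n x y powr (real n - \<gamma>)) \<in> borel_measurable (Rn n \<Otimes>\<^sub>M Rn n)"
    by (simp add: case_prod_beta')
  from borel_measurable_lebesgue_integral[OF this] show ?thesis
    unfolding commutator_def by measurable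
qed

lemma commutator_uminus: "commutator n C \<gamma> (\<lambda>x. - b x) f = (\<lambda>x. - commutator n C \<gamma> b f x)"
proof
  fix x
  have "(\<lambda>y. (- b x - - b y) * f y / edist n x y powr (real n - \<gamma>))
      = (\<lambda>y. - ((b x - b y) * f y / edist n x y powr (real n - \<gamma>)))"
    by (simp add: fun_eq_iff algebra_simps minus_divide_left)
  then show "commutator n C \<gamma> (\<lambda>x. - b x) f x = - commutator n C \<gamma> b f x"
    unfolding commutator_def by simp
qed

lemma amalgam_norm_uminus: "amalgam_norm n p s \<alpha> (\<lambda>x. - f x) = amalgam_norm n p s \<alpha> f"
  by (simp add: amalgam_norm_def)

lemma integrable_commutator_integrand_away:
  assumes b: "loc_int n b" and x: "x \<in> space (Rn n)" and r: "r > 0" and \<gamma>: "\<gamma> < real n"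
    and y: "y \<in> space (Rn n)" and E: "E \<in> sets (Rn n)" "E \<subseteq> eball n y r" and far: "\<And>z. z \<in> E \<Longrightarrow> r \<le> edist n x z"
  shows "integrable (Rn n) (\<lambda>z. (b x - b z) * indicator E z / edist n x z powr (real n - \<gamma>))"
proof (rule Bochner_Integration.integrable_bound)
  let ?B = "eball n y r"
  have "integrable (Rn n) (\<lambda>z. indicator ?B z * b z)"
    using b r y unfolding loc_int_def set_integrable_def by auto
  moreover have "integrable (Rn n) (\<lambda>z. indicator ?B z :: real)"
    using emeasure_eball_less_top[OF r] by simp
  ultimately show "integrable (Rn n) (\<lambda>z. (\<bar>b x\<bar> * indicator ?B z + \<bar>indicator ?B z * b z\<bar>) / r powr (real n - \<gamma>))"
    by (intro integrable_divide integrable_add integrable_mult_right integrable_abs) auto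
  have [measurable]: "b \<in> borel_measurable (Rn n)"
    by (rule borel_measurable_loc_int[OF b])
  have [measurable]: "(\<lambda>z. edist n x z) \<in> borel_measurable (Rn n)"
    using x by (intro borel_measurable_edist) auto
  show "(\<lambda>z. (b x - b z) * indicator E z / edist n x z powr (real n - \<gamma>)) \<in> borel_measurable (Rn n)"
    using E(1) by measurable
  show "AE z in Rn n. norm ((b x - b z) * indicator E z / edist n x z powr (real n - \<gamma>))
      \<le> norm ((\<bar>b x\<bar> * indicator ?B z + \<bar>indicator ?B z * b z\<bar>) / r powr (real n - \<gamma>))"
  proof (rule AE_I2)
    fix z
    show "norm ((b x - b z) * indicator E z / edist n x z powr (real n - \<gamma>))
        \<le> norm ((\<bar>b x\<bar> * indicator ?B z + \<bar>indicator ?B z * b z\<bar>) / r powr (real n - \<gamma>))"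
    proof (cases "z \<in> E")
      case True
      have "r powr (real n - \<gamma>) \<le> edist n x z powr (real n - \<gamma>)"
        using far[OF True] r \<gamma> by (intro powr_mono2) auto
      then have "\<bar>b x - b z\<bar> / edist n x z powr (real n - \<gamma>) \<le> (\<bar>b x\<bar> + \<bar>b z\<bar>) / r powr (real n - \<gamma>)"
        using r by (intro frac_le) auto
      then show ?thesis
        using True E(2) by (auto simp: abs_mult)
    qed simp
  qed
qed

lemma commutator_indicator_ge:
  assumes b: "loc_int n b" and x: "x \<in> space (Rn n)" and r: "r > 0" and \<gamma>: "\<gamma> < real n" and C: "C > 0"
    and y: "y \<in> space (Rn n)" and E: "E \<in> sets (Rn n)" "E \<subseteq> eball n y r"
    and dist: "\<And>z. z \<in> E \<Longrightarrow> r \<le> edist n x z \<and> edist n x z \<le> R"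
    and below: "\<And>z. z \<in> E \<Longrightarrow> b z \<le> m" and above: "m \<le> b x"
  shows "C * R powr (\<gamma> - real n) * measure (Rn n) E * (b x - m) \<le> commutator n C \<gamma> b (indicator E) x"
proof -
  let ?c = "(b x - m) * R powr (\<gamma> - real n)"
  have pointwise: "?c * indicator E z \<le> (b x - b z) * indicator E z / edist n x z powr (real n - \<gamma>)" for z
  proof (cases "z \<in> E")
    case True
    have d: "0 < edist n x z" "edist n x z \<le> R"
      using dist[OF True] r by auto
    have "?c = (b x - m) / R powr (real n - \<gamma>)"
      using powr_minus_divide[of R "real n - \<gamma>"] by simp
    also have "\<dots> \<le> (b x - m) / edist n x z powr (real n - \<gamma>)"
      using d above \<gamma> by (intro divide_left_mono powr_mono2 mult_pos_pos) auto
    also have "\<dots> \<le> (b x - b z) / edist n x z powr (real n - \<gamma>)"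
      using below[OF True] d by (intro divide_right_mono) auto
    finally show ?thesis
      using True by simp
  qed simp
  have "emeasure (Rn n) E < \<infinity>"
    using emeasure_mono[OF E(2) eball_in_sets] emeasure_eball_less_top[OF r, of n y] by simp
  then have "?c * measure (Rn n) E = (\<integral>z. ?c * indicator E z \<partial>Rn n)"
    using E(1) by (simp add: Int_absorb2 sets.sets_into_space)
  also have "\<dots> \<le> (\<integral>z. (b x - b z) * indicator E z / edist n x z powr (real n - \<gamma>) \<partial>Rn n)"
    using integrable_commutator_integrand_away[OF b x r \<gamma> y E] dist pointwise \<open>emeasure (Rn n) E < \<infinity>\<close> E(1)
    by (intro integral_mono) auto
  finally show ?thesis
    using C unfolding commutator_def by (simp add: mult_ac)
qed

section \<open>Oscillation of \<open>b\<close> on balls\<close>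

lemma edist_shifted_eball_bounds:
  assumes n: "n > 0" and r: "r > 0"
    and x: "x \<in> eball n y r" and z: "z \<in> eball n (y(0 := y 0 + 3*r)) r"
  shows "r \<le> edist n x z" and "edist n x z \<le> 5*r"
proof -
  let ?y' = "y(0 := y 0 + 3*r)"
  have dx: "edist n x y < r" and dz: "edist n z ?y' < r"
    using x z by (auto simp: eball_def)
  have "edist n x z \<le> edist n x y + (edist n y ?y' + edist n ?y' z)"
    using edist_triangle[of n x z y] edist_triangle[of n y z ?y'] by linarith
  then show "edist n x z \<le> 5*r"
    using dx dz edist_shift_first[OF n, of "3*r" y] r edist_commute[of n ?y' z] by linarith
  have "\<bar>x 0 - y 0\<bar> < r" "\<bar>z 0 - ?y' 0\<bar> < r"
    using abs_component_le_edist[OF n] dx dz by (meson le_less_trans)+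
  then show "r \<le> edist n x z"
    using abs_component_le_edist[OF n, of x z] by (simp add: abs_less_iff abs_le_iff)
qed

lemma nn_integral_eball_le_mixed_norm:
  assumes g: "g \<in> borel_measurable (Rn n)" and r: "r > 0" and q: "\<forall>i<n. 1 < q i \<and> q i < \<infinity>"
  shows "(\<integral>\<^sup>+x. ennreal (indicator (eball n y r) x * \<bar>g x\<bar>) \<partial>Rn n)
    \<le> ennreal ((2*r) powr (real n - (\<Sum>i<n. inv_exp (q i))))
      * mixed_norm n q (\<lambda>x. ennreal (indicator (eball n y r) x * \<bar>g x\<bar>))"
proof -
  have "(\<integral>\<^sup>+x. ennreal (indicator (eball n y r) x * \<bar>g x\<bar>) \<partial>Rn n)
      \<le> ennreal (\<Prod>i<n. ((y i + r) - (y i - r)) powr (1 - inv_exp (q i)))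
        * mixed_norm n q (\<lambda>x. ennreal (indicator (eball n y r) x * \<bar>g x\<bar>))"
  proof (rule nn_integral_le_mixed_norm[OF _ _ _ q])
    fix x assume "\<exists>i<n. x i \<notin> {y i - r<..<y i + r}"
    then have "x \<notin> eball n y r"
      using eball_subset_box[of n y r] by (auto simp: PiE_def Pi_def)
    then show "ennreal (indicator (eball n y r) x * \<bar>g x\<bar>) = 0"
      by simp
  qed (use g r in auto)
  also have "(\<Prod>i<n. ((y i + r) - (y i - r)) powr (1 - inv_exp (q i)))
      = (2*r) powr (real n - (\<Sum>i<n. inv_exp (q i)))"
    using r by (simp add: powr_sum[symmetric] sum_subtractf)
  finally show ?thesis .
qed

lemma sublevel_set_eball_in_sets:
  fixes b :: "(nat \<Rightarrow> real) \<Rightarrow> real"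
  assumes [measurable]: "b \<in> borel_measurable (Rn n)"
  shows "{z \<in> eball n y r. b z \<le> m} \<in> sets (Rn n)"
proof -
  have "{z \<in> eball n y r. b z \<le> m} = eball n y r \<inter> {z \<in> space (Rn n). b z \<le> m}"
    unfolding eball_def by auto
  also have "\<dots> \<in> sets (Rn n)"
    by measurable
  finally show ?thesis .
qed

(* The constant is C (5r)^(gamma - n) times the lower bound (2r/n)^n / 2 for the measure of E. *)
lemma positive_part_le_commutator_indicator:
  fixes b :: "(nat \<Rightarrow> real) \<Rightarrow> real" and m r :: real
  assumes n: "n \<ge> 1" and b: "loc_int n b" and \<gamma>: "\<gamma> < real n" and C: "C > 0"
    and y: "y \<in> space (Rn n)" and r: "r > 0"
  defines "B \<equiv> eball n y r" and "E \<equiv> {z \<in> eball n (y(0 := y 0 + 3*r)) r. b z \<le> m}"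
  assumes median: "measure (Rn n) (eball n (y(0 := y 0 + 3*r)) r) / 2 \<le> measure (Rn n) E"
  shows "ennreal (C * 5 powr (\<gamma> - real n) * (2 / real n)^n / 2 * r powr \<gamma>)
      * (\<integral>\<^sup>+x. ennreal (indicator B x * max 0 (b x - m)) \<partial>Rn n)
    \<le> (\<integral>\<^sup>+x. ennreal (indicator B x * \<bar>commutator n C \<gamma> b (indicator E) x\<bar>) \<partial>Rn n)"
proof -
  let ?y' = "y(0 := y 0 + 3*r)"
  define c where "c = C * 5 powr (\<gamma> - real n) * (2 / real n)^n / 2 * r powr \<gamma>"
  have [measurable]: "b \<in> borel_measurable (Rn n)"
    by (rule borel_measurable_loc_int[OF b])
  have E: "E \<in> sets (Rn n)" "E \<subseteq> eball n ?y' r"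
    using sublevel_set_eball_in_sets[OF borel_measurable_loc_int[OF b]] unfolding E_def by auto
  have "(2*r/n)^n / 2 \<le> measure (Rn n) E"
    using median vol_eball_bounds(1)[OF n r, of ?y'] unfolding vol_def by linarith
  then have c: "0 \<le> c" "c \<le> C * (5*r) powr (\<gamma> - real n) * measure (Rn n) E"
    using C r n unfolding c_def
    by (auto simp: powr_mult powr_diff powr_realpow power_divide field_simps)
  have "c * max 0 (b x - m) \<le> \<bar>commutator n C \<gamma> b (indicator E) x\<bar>" if "x \<in> B" and "m \<le> b x" for x
  proof -
    have "c * (b x - m) \<le> C * (5*r) powr (\<gamma> - real n) * measure (Rn n) E * (b x - m)"
      using c that by (intro mult_right_mono) auto
    also have "\<dots> \<le> commutator n C \<gamma> b (indicator E) x"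
      using that n r edist_shifted_eball_bounds[of n r x y]
      by (intro commutator_indicator_ge[OF b _ r \<gamma> C fun_upd_in_space_Rn[OF y] E])
        (auto simp: B_def E_def eball_def)
    finally show ?thesis
      using that by simp
  qed
  then have "ennreal c * ennreal (indicator B x * max 0 (b x - m))
      \<le> ennreal (indicator B x * \<bar>commutator n C \<gamma> b (indicator E) x\<bar>)" for x
    using c(1) by (cases "x \<in> B \<and> m \<le> b x") (auto simp: ennreal_mult[symmetric] intro!: ennreal_leI)
  then have "(\<integral>\<^sup>+x. ennreal c * ennreal (indicator B x * max 0 (b x - m)) \<partial>Rn n)
      \<le> (\<integral>\<^sup>+x. ennreal (indicator B x * \<bar>commutator n C \<gamma> b (indicator E) x\<bar>) \<partial>Rn n)"
    by (rule nn_integral_mono)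
  then show ?thesis
    unfolding c_def B_def by (simp add: nn_integral_cmult)
qed

lemma ennreal_le_of_mult_le_chain:
  fixes x y :: ennreal
  assumes xy: "ennreal a * x \<le> ennreal b * y" and y: "ennreal c * y \<le> ennreal d"
    and "a > 0" "b \<ge> 0" "c > 0" "d \<ge> 0"
  shows "x \<le> ennreal (b * d / (a * c))"
proof -
  have "ennreal (a * c) * x = ennreal c * (ennreal a * x)"
    using assms by (simp add: ennreal_mult mult_ac)
  also have "\<dots> \<le> ennreal c * (ennreal b * y)"
    using xy by (rule mult_left_mono) simp
  also have "\<dots> = ennreal b * (ennreal c * y)"
    by (simp add: mult_ac)
  also have "\<dots> \<le> ennreal b * ennreal d"
    using y by (rule mult_left_mono) simp
  also have "\<dots> = ennreal (a * c) * ennreal (b * d / (a * c))"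
    using assms by (simp add: ennreal_mult[symmetric])
  finally show ?thesis
    using assms by (simp add: ennreal_mult_le_mult_iff)
qed

lemma mixed_norm_commutator_indicator_le:
  assumes K: "\<forall>f. in_amalgam n p s \<alpha> f \<longrightarrow>
      amalgam_norm n q s \<beta> (commutator n C \<gamma> b f) \<le> ennreal K * amalgam_norm n p s \<alpha> f"
    and E: "E \<in> sets (Rn n)" and U: "U \<ge> 0" "amalgam_norm n p s \<alpha> (indicator E) \<le> ennreal U"
    and L: "ennreal L * N \<le> amalgam_norm n q s \<beta> (commutator n C \<gamma> b (indicator E))"
  shows "ennreal L * N \<le> ennreal (max K 0 * U)"
proof -
  have "in_amalgam n p s \<alpha> (indicator E)"
    unfolding in_amalgam_def using loc_int_indicator[OF E] U(2) by (simp add: le_less_trans)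
  then have "amalgam_norm n q s \<beta> (commutator n C \<gamma> b (indicator E)) \<le> ennreal K * amalgam_norm n p s \<alpha> (indicator E)"
    using K by blast
  also have "\<dots> \<le> ennreal K * ennreal U"
    using U(2) by (rule mult_left_mono) simp
  also have "\<dots> = ennreal (max K 0 * U)"
    using U(1) ennreal_mult[of "max K 0" U] by simp
  finally show ?thesis
    using L by (rule order_trans[rotated])
qed

lemma positive_part_above_median_le:
  assumes n: "n \<ge> 1" and \<gamma>: "\<gamma> < real n" and C: "C > 0"
    and p: "\<forall>i<n. 1 < p i \<and> p i < \<infinity>" and q: "\<forall>i<n. 1 < q i \<and> q i < \<infinity>" and s: "\<forall>i<n. 1 < s i"
    and s_\<alpha>: "avg_inv n s \<le> 1/\<alpha>" and \<alpha>_p: "1/\<alpha> \<le> avg_inv n p"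
    and \<gamma>_eq: "\<gamma> = real n / \<alpha> - real n / \<beta>"
    and b: "loc_int n b"
    and K: "\<forall>f. in_amalgam n p s \<alpha> f \<longrightarrow>
      amalgam_norm n q s \<beta> (commutator n C \<gamma> b f) \<le> ennreal K * amalgam_norm n p s \<alpha> f"
  obtains T where "T \<ge> 0"
    and "\<And>y r m. y \<in> space (Rn n) \<Longrightarrow> r > 0 \<Longrightarrow>
      measure (Rn n) (eball n (y(0 := y 0 + 3*r)) r) / 2
        \<le> measure (Rn n) {z \<in> eball n (y(0 := y 0 + 3*r)) r. b z \<le> m} \<Longrightarrow>
      (\<integral>\<^sup>+x. ennreal (indicator (eball n y r) x * max 0 (b x - m)) \<partial>Rn n) \<le> ennreal (T * r^n)"
proof -
  have p0: "\<forall>i<n. 0 < p i" and s0: "\<forall>i<n. 0 < s i"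
    using p s by (auto intro: less_trans[OF zero_less_one])
  obtain U where U: "U \<ge> 0" "\<And>r y E. r > 0 \<Longrightarrow> E \<in> sets (Rn n) \<Longrightarrow> E \<subseteq> eball n y r \<Longrightarrow>
      amalgam_norm n p s \<alpha> (indicator E) \<le> ennreal (U * r powr (real n / \<alpha>))"
    using amalgam_norm_indicator_le[OF n p0 s0 s_\<alpha> \<alpha>_p] by blast
  obtain L where L: "L > 0" "\<And>r y g. r > 0 \<Longrightarrow> g \<in> borel_measurable (Rn n) \<Longrightarrow>
      ennreal (L * r powr (real n / \<beta> - (\<Sum>i<n. inv_exp (q i))))
        * mixed_norm n q (\<lambda>x. ennreal (indicator (eball n y r) x * \<bar>g x\<bar>)) \<le> amalgam_norm n q s \<beta> g"
    using amalgam_norm_ge_mixed_norm_eball[OF n s0] by blast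
  define Q where "Q = (\<Sum>i<n. inv_exp (q i))"
  define c where "c = C * 5 powr (\<gamma> - real n) * (2 / real n)^n / 2"
  define T where "T = 2 powr (real n - Q) * max K 0 * U / (c * L)"
  have c: "c > 0"
    unfolding c_def using C n by simp
  show thesis
  proof
    show "T \<ge> 0"
      unfolding T_def using U(1) c L(1) by simp
    fix y r m assume y: "y \<in> space (Rn n)" and r: "r > 0"
      and median: "measure (Rn n) (eball n (y(0 := y 0 + 3*r)) r) / 2
        \<le> measure (Rn n) {z \<in> eball n (y(0 := y 0 + 3*r)) r. b z \<le> m}"
    define E where "E = {z \<in> eball n (y(0 := y 0 + 3*r)) r. b z \<le> m}"
    define g where "g = commutator n C \<gamma> b (indicator E)"
    let ?I = "\<integral>\<^sup>+x. ennreal (indicator (eball n y r) x * max 0 (b x - m)) \<partial>Rn n"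
    let ?N = "mixed_norm n q (\<lambda>x. ennreal (indicator (eball n y r) x * \<bar>g x\<bar>))"
    have E: "E \<in> sets (Rn n)" "E \<subseteq> eball n (y(0 := y 0 + 3*r)) r"
      using sublevel_set_eball_in_sets[OF borel_measurable_loc_int[OF b]] unfolding E_def by auto
    have [measurable]: "g \<in> borel_measurable (Rn n)"
      unfolding g_def using borel_measurable_loc_int[OF b] borel_measurable_indicator[OF E(1)]
      by (rule borel_measurable_commutator)
    have N: "ennreal (L * r powr (real n / \<beta> - Q)) * ?N \<le> ennreal (max K 0 * (U * r powr (real n / \<alpha>)))"
      using U(1) r unfolding Q_def g_def
      by (intro mixed_norm_commutator_indicator_le[OF K E(1) _ U(2)[OF r E]] L(2)[OF r])
        (auto simp: g_def[symmetric])
    have "ennreal (c * r powr \<gamma>) * ?I \<le> (\<integral>\<^sup>+x. ennreal (indicator (eball n y r) x * \<bar>g x\<bar>) \<partial>Rn n)"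
      using positive_part_le_commutator_indicator[OF n b \<gamma> C y r median]
      unfolding c_def g_def E_def by simp
    also have "\<dots> \<le> ennreal ((2*r) powr (real n - Q)) * ?N"
      unfolding Q_def by (rule nn_integral_eball_le_mixed_norm) (use r q in auto)
    finally have "?I \<le> ennreal ((2*r) powr (real n - Q) * (max K 0 * U * r powr (real n / \<alpha>))
        / (c * r powr \<gamma> * (L * r powr (real n / \<beta> - Q))))"
      using N c L(1) U(1) r by (intro ennreal_le_of_mult_le_chain) (auto simp: mult.assoc)
    also have "\<dots> = ennreal (T * r^n)"
    proof -
      have "r powr \<gamma> * r powr (real n / \<beta> - Q) = r powr (real n / \<alpha> - Q)"
        using \<gamma>_eq by (simp add: powr_add[symmetric])
      moreover have "(2*r) powr (real n - Q) * r powr (real n / \<alpha>)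
          = 2 powr (real n - Q) * (r powr (real n / \<alpha> - Q) * r^n)"
        using r powr_realpow[OF r, of n]
        by (simp add: powr_mult powr_add[symmetric] algebra_simps flip: powr_realpow)
      ultimately show ?thesis
        using c L(1) r unfolding T_def by (simp add: field_simps)
    qed
    finally show "?I \<le> ennreal (T * r^n)" .
  qed
qed

lemma set_integrable_abs_sub_const:
  fixes b :: "'a \<Rightarrow> real"
  assumes "set_integrable M B b" "B \<in> sets M" "emeasure M B < \<infinity>"
  shows "set_integrable M B (\<lambda>x. \<bar>b x - c\<bar>)"
proof -
  have "integrable M (\<lambda>x. \<bar>indicator B x * b x - c * indicator B x\<bar>)"
    using assms unfolding set_integrable_def by simp
  moreover have "(\<lambda>x. \<bar>indicator B x * b x - c * indicator B x\<bar>) = (\<lambda>x. indicator B x * \<bar>b x - c\<bar>)"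
    by (auto simp: indicator_def)
  ultimately show ?thesis
    unfolding set_integrable_def by simp
qed

lemma set_integral_abs_sub_average_le:
  fixes b :: "'a \<Rightarrow> real"
  assumes b: "set_integrable M B b" and B: "B \<in> sets M" "emeasure M B < \<infinity>"
  defines "a \<equiv> (\<integral>x\<in>B. b x \<partial>M) / measure M B"
  shows "(\<integral>x\<in>B. \<bar>b x - a\<bar> \<partial>M) \<le> 2 * (\<integral>x\<in>B. \<bar>b x - m\<bar> \<partial>M)"
proof -
  have bB: "integrable M (\<lambda>x. indicator B x * b x)" and 1: "integrable M (\<lambda>x. indicator B x :: real)"
    using b B unfolding set_integrable_def by auto
  have int_1: "(\<integral>x. indicator B x \<partial>M) = measure M B"
    using B by (simp add: Int_absorb2 sets.sets_into_space)
  have int_abs: "integrable M (\<lambda>x. indicator B x * \<bar>b x - c\<bar>)" for c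
    using set_integrable_abs_sub_const[OF b B] unfolding set_integrable_def by simp
  have "\<bar>m - a\<bar> * measure M B \<le> (\<integral>x. indicator B x * \<bar>b x - m\<bar> \<partial>M)"
  proof (cases "measure M B = 0")
    case False
    then have "(m - a) * measure M B = (\<integral>x. indicator B x * (m - b x) \<partial>M)"
      using bB 1 int_1 unfolding a_def set_lebesgue_integral_def by (simp add: algebra_simps)
    then have "\<bar>m - a\<bar> * measure M B = \<bar>\<integral>x. indicator B x * (m - b x) \<partial>M\<bar>"
      by (metis abs_mult abs_of_nonneg measure_nonneg)
    also have "\<dots> \<le> (\<integral>x. \<bar>indicator B x * (m - b x)\<bar> \<partial>M)"
      by (rule integral_abs_bound)
    also have "\<dots> = (\<integral>x. indicator B x * \<bar>b x - m\<bar> \<partial>M)"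
      by (intro Bochner_Integration.integral_cong) (auto simp: indicator_def abs_minus_commute)
    finally show ?thesis .
  qed (use int_abs in \<open>simp add: integral_nonneg_AE\<close>)
  moreover have "(\<integral>x. indicator B x * \<bar>b x - a\<bar> \<partial>M)
      \<le> (\<integral>x. indicator B x * \<bar>b x - m\<bar> + \<bar>m - a\<bar> * indicator B x \<partial>M)"
    using int_abs[of a] int_abs[of m] 1 by (intro integral_mono) (auto simp: indicator_def)
  ultimately show ?thesis
    using int_abs[of m] 1 int_1 unfolding set_lebesgue_integral_def by simp
qed

lemma mean_oscillation_le:
  assumes n: "n \<ge> 1" and b: "loc_int n b" and y: "y \<in> space (Rn n)" and r: "r > 0" and T: "T \<ge> 0"
    and osc: "(\<integral>\<^sup>+x. ennreal (indicator (eball n y r) x * \<bar>b x - m\<bar>) \<partial>Rn n) \<le> ennreal (T * r^n)"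
  shows "(1 / vol n (eball n y r)) * (\<integral>x\<in>eball n y r. \<bar>b x - ball_avg n b (eball n y r)\<bar> \<partial>Rn n)
    \<le> 2 * T * (real n / 2)^n"
proof -
  define B where "B = eball n y r"
  have b_B: "set_integrable (Rn n) B b" and B: "emeasure (Rn n) B < \<infinity>"
    using b y r emeasure_eball_less_top[OF r] unfolding loc_int_def B_def by auto
  have \<mu>: "(2*r/n)^n \<le> vol n B" "0 < (2*r/n)^n"
    using vol_eball_bounds(1)[OF n r] r n unfolding B_def by auto
  have "integrable (Rn n) (\<lambda>x. indicator B x * \<bar>b x - m\<bar>)"
    using set_integrable_abs_sub_const[OF b_B _ B] unfolding set_integrable_def B_def by simp
  then have "ennreal (\<integral>x\<in>B. \<bar>b x - m\<bar> \<partial>Rn n) \<le> ennreal (T * r^n)"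
    using osc unfolding B_def set_lebesgue_integral_def by (simp add: nn_integral_eq_integral)
  then have "(\<integral>x\<in>B. \<bar>b x - m\<bar> \<partial>Rn n) \<le> T * r^n"
    using T r by (simp add: ennreal_le_iff)
  then have "(\<integral>x\<in>B. \<bar>b x - ball_avg n b B\<bar> \<partial>Rn n) \<le> 2 * T * r^n"
    using set_integral_abs_sub_average_le[OF b_B _ B, of m] unfolding B_def
    by (simp add: ball_avg_def vol_def)
  then have "(1 / vol n B) * (\<integral>x\<in>B. \<bar>b x - ball_avg n b B\<bar> \<partial>Rn n) \<le> 2 * T * r^n / (2*r/n)^n"
    using \<mu> T r by (simp add: divide_left_mono frac_le)
  also have "\<dots> = 2 * T * (real n / 2)^n"
    using r n by (simp add: power_divide power_mult_distrib field_simps)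
  finally show ?thesis
    unfolding B_def .
qed

(* The second summand is written with - b x - - m so that it is the first one for -b and -m. *)
lemma nn_integral_indicator_abs_eq_positive_parts:
  fixes b :: "'a \<Rightarrow> real"
  assumes [measurable]: "b \<in> borel_measurable M" "B \<in> sets M"
  shows "(\<integral>\<^sup>+x. ennreal (indicator B x * \<bar>b x - m\<bar>) \<partial>M)
    = (\<integral>\<^sup>+x. ennreal (indicator B x * max 0 (b x - m)) \<partial>M)
      + (\<integral>\<^sup>+x. ennreal (indicator B x * max 0 (- b x - - m)) \<partial>M)"
proof -
  have "(\<integral>\<^sup>+x. ennreal (indicator B x * \<bar>b x - m\<bar>) \<partial>M)
      = (\<integral>\<^sup>+x. ennreal (indicator B x * max 0 (b x - m)) + ennreal (indicator B x * max 0 (- b x - - m)) \<partial>M)"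
    by (intro nn_integral_cong) (auto simp: indicator_def simp flip: ennreal_plus)
  also have "\<dots> = (\<integral>\<^sup>+x. ennreal (indicator B x * max 0 (b x - m)) \<partial>M)
      + (\<integral>\<^sup>+x. ennreal (indicator B x * max 0 (- b x - - m)) \<partial>M)"
    by (intro nn_integral_add) measurable
  finally show ?thesis .
qed

lemma oscillation_on_balls_le:
  assumes n: "n \<ge> 1" and \<gamma>: "\<gamma> < real n" and C: "C > 0"
    and p: "\<forall>i<n. 1 < p i \<and> p i < \<infinity>" and q: "\<forall>i<n. 1 < q i \<and> q i < \<infinity>" and s: "\<forall>i<n. 1 < s i"
    and s_\<alpha>: "avg_inv n s \<le> 1/\<alpha>" and \<alpha>_p: "1/\<alpha> \<le> avg_inv n p"
    and \<gamma>_eq: "\<gamma> = real n / \<alpha> - real n / \<beta>"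
    and b: "loc_int n b"
    and K: "\<forall>f. in_amalgam n p s \<alpha> f \<longrightarrow>
      amalgam_norm n q s \<beta> (commutator n C \<gamma> b f) \<le> ennreal K * amalgam_norm n p s \<alpha> f"
  obtains T where "T \<ge> 0"
    and "\<And>y r. y \<in> space (Rn n) \<Longrightarrow> r > 0 \<Longrightarrow>
      \<exists>m. (\<integral>\<^sup>+x. ennreal (indicator (eball n y r) x * \<bar>b x - m\<bar>) \<partial>Rn n) \<le> ennreal (T * r^n)"
proof -
  have K_uminus: "\<forall>f. in_amalgam n p s \<alpha> f \<longrightarrow>
      amalgam_norm n q s \<beta> (commutator n C \<gamma> (\<lambda>x. - b x) f) \<le> ennreal K * amalgam_norm n p s \<alpha> f"
    using K by (simp add: commutator_uminus amalgam_norm_uminus)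
  obtain T\<^sub>1 where T\<^sub>1: "T\<^sub>1 \<ge> 0" "\<And>y r m. y \<in> space (Rn n) \<Longrightarrow> r > 0 \<Longrightarrow>
      measure (Rn n) (eball n (y(0 := y 0 + 3*r)) r) / 2
        \<le> measure (Rn n) {z \<in> eball n (y(0 := y 0 + 3*r)) r. b z \<le> m} \<Longrightarrow>
      (\<integral>\<^sup>+x. ennreal (indicator (eball n y r) x * max 0 (b x - m)) \<partial>Rn n) \<le> ennreal (T\<^sub>1 * r^n)"
    using positive_part_above_median_le[OF n \<gamma> C p q s s_\<alpha> \<alpha>_p \<gamma>_eq b K] by blast
  obtain T\<^sub>2 where T\<^sub>2: "T\<^sub>2 \<ge> 0" "\<And>y r m. y \<in> space (Rn n) \<Longrightarrow> r > 0 \<Longrightarrow>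
      measure (Rn n) (eball n (y(0 := y 0 + 3*r)) r) / 2
        \<le> measure (Rn n) {z \<in> eball n (y(0 := y 0 + 3*r)) r. - b z \<le> m} \<Longrightarrow>
      (\<integral>\<^sup>+x. ennreal (indicator (eball n y r) x * max 0 (- b x - m)) \<partial>Rn n) \<le> ennreal (T\<^sub>2 * r^n)"
    using positive_part_above_median_le[OF n \<gamma> C p q s s_\<alpha> \<alpha>_p \<gamma>_eq loc_int_uminus[OF b] K_uminus]
    by blast
  show thesis
  proof
    show "T\<^sub>1 + T\<^sub>2 \<ge> 0"
      using T\<^sub>1(1) T\<^sub>2(1) by simp
    fix y and r :: real assume y: "y \<in> space (Rn n)" and r: "r > 0"
    let ?B = "eball n (y(0 := y 0 + 3*r)) r"
    have b_meas: "b \<in> borel_measurable (Rn n)"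
      by (rule borel_measurable_loc_int[OF b])
    obtain m where m: "measure (Rn n) ?B / 2 \<le> measure (Rn n) {z \<in> ?B. b z \<le> m}"
        "measure (Rn n) ?B / 2 \<le> measure (Rn n) {z \<in> ?B. m \<le> b z}"
      using median_exists_on_set[OF b_meas eball_in_sets emeasure_eball_less_top[OF r]] by blast
    have "(\<integral>\<^sup>+x. ennreal (indicator (eball n y r) x * \<bar>b x - m\<bar>) \<partial>Rn n)
        = (\<integral>\<^sup>+x. ennreal (indicator (eball n y r) x * max 0 (b x - m)) \<partial>Rn n)
          + (\<integral>\<^sup>+x. ennreal (indicator (eball n y r) x * max 0 (- b x - - m)) \<partial>Rn n)"
      by (rule nn_integral_indicator_abs_eq_positive_parts[OF b_meas eball_in_sets])
    also have "\<dots> \<le> ennreal (T\<^sub>1 * r^n) + ennreal (T\<^sub>2 * r^n)"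
      using T\<^sub>1(2)[OF y r m(1)] T\<^sub>2(2)[OF y r, of "- m"] m(2) by (intro add_mono) simp_all
    also have "\<dots> = ennreal ((T\<^sub>1 + T\<^sub>2) * r^n)"
      using T\<^sub>1(1) T\<^sub>2(1) r by (simp add: distrib_right flip: ennreal_plus)
    finally show "\<exists>m. (\<integral>\<^sup>+x. ennreal (indicator (eball n y r) x * \<bar>b x - m\<bar>) \<partial>Rn n)
        \<le> ennreal ((T\<^sub>1 + T\<^sub>2) * r^n)"
      by blast
  qed
qed

theorem theorem2p11:
  fixes n :: nat and \<gamma> \<alpha> \<beta> C :: real
    and p q s :: "nat \<Rightarrow> ennreal"
    and b :: "(nat \<Rightarrow> real) \<Rightarrow> real"
  assumes "0 < \<gamma>" "\<gamma> < real n"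
    and "C > 0" "\<alpha> > 0" "\<beta> > 0"
    and "\<forall>i<n. 1 < p i \<and> p i < \<infinity>"
    and "\<forall>i<n. 1 < q i \<and> q i < \<infinity>"
    and "\<forall>i<n. 1 < s i"
    and "avg_inv n s \<le> 1 / \<alpha>" "1 / \<alpha> \<le> avg_inv n p"
    and "avg_inv n s \<le> 1 / \<beta>" "1 / \<beta> \<le> avg_inv n q"
    and "\<gamma> = (\<Sum>i<n. inv_exp (p i)) - (\<Sum>i<n. inv_exp (q i))"
    and "\<gamma> = real n / \<alpha> - real n / \<beta>"
    and "loc_int n b"
    and "\<exists>K::real. \<forall>f. in_amalgam n p s \<alpha> f \<longrightarrow>
           amalgam_norm n q s \<beta> (commutator n C \<gamma> b f) \<le> ennreal K * amalgam_norm n p s \<alpha> f"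
  shows "BMO n b"
proof -
  have n: "n \<ge> 1"
    using assms(1,2) by simp
  obtain K where "\<forall>f. in_amalgam n p s \<alpha> f \<longrightarrow>
      amalgam_norm n q s \<beta> (commutator n C \<gamma> b f) \<le> ennreal K * amalgam_norm n p s \<alpha> f"
    using assms(16) by blast
  then obtain T where T: "T \<ge> 0" "\<And>y r. y \<in> space (Rn n) \<Longrightarrow> r > 0 \<Longrightarrow>
      \<exists>m. (\<integral>\<^sup>+x. ennreal (indicator (eball n y r) x * \<bar>b x - m\<bar>) \<partial>Rn n) \<le> ennreal (T * r^n)"
    using oscillation_on_balls_le[OF n assms(2,3,6,7,8,9,10,14,15)] by blast
  have "(1 / vol n (eball n y r)) * (\<integral>x\<in>eball n y r. \<bar>b x - ball_avg n b (eball n y r)\<bar> \<partial>Rn n)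
      \<le> 2 * T * (real n / 2)^n" if "y \<in> space (Rn n)" "r > 0" for y r
    using T(2)[OF that] mean_oscillation_le[OF n assms(15) that T(1)] by blast
  then show ?thesis
    unfolding BMO_def using assms(15) by blast
qed

end
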